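(* Let $N\ge1$, $s\in(0,1)$, $p\in[1,\infty)$. Let $\mathring{B}^s_{p,\infty}(\mathbb{R}^N)$, resp. $\mathring{N}^{s,p}(\mathbb{R}^N)$, denote the closure of $C^\infty_c(\mathbb{R}^N)$ in $B^s_{p,\infty}(\mathbb{R}^N)$, resp. in $N^{s,p}(\mathbb{R}^N)$. Then $f\in\mathring{N}^{s,p}(\mathbb{R}^N)$ if and only if $f\in\mathring{B}^s_{p,\infty}(\mathbb{R}^N)$.
   Context: $B^s_{p,\infty}(\mathbb{R}^N)$ is the set of $f\in L^p$ with $[f]_{B^s_{p,\infty}}:=\sup_{h\ne0}|h|^{-s}\|f(\cdot+h)-f\|_{L^p}<\infty$, normed by $\|f\|_{L^p}+[f]_{B^s_{p,\infty}}$. $N^{s,p}(\mathbb{R}^N)$ is the same set of functions endowed with the norm $\|f\|_{L^p}+[f]_{N^{s,p}}$, where $[f]_{N^{s,p}}:=\limsup_{|h|\to0}|h|^{-s}\|f(\cdot+h)-f\|_{L^p}$. *)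

theory Defs
  imports "HOL-Analysis.Analysis" "HOL-Library.Liminf_Limsup"
begin

inductive_set iter_derivs :: "('a::euclidean_space \<Rightarrow> real) \<Rightarrow> ('a \<Rightarrow> real) set"
  for g :: "'a \<Rightarrow> real" where
  base: "g \<in> iter_derivs g"
| step: "h \<in> iter_derivs g \<Longrightarrow> h differentiable_on UNIV \<Longrightarrow>
         (\<lambda>x. frechet_derivative h (at x) v) \<in> iter_derivs g"

definition smooth_fun :: "('a::euclidean_space \<Rightarrow> real) \<Rightarrow> bool" where
  "smooth_fun g \<longleftrightarrow> (\<forall>h\<in>iter_derivs g. h differentiable_on UNIV)"

definition Cc_inf :: "('a::euclidean_space \<Rightarrow> real) set" where
  "Cc_inf = {g. smooth_fun g \<and> compact (closure {x. g x \<noteq> 0})}"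

definition in_Lp :: "real \<Rightarrow> ('a::euclidean_space \<Rightarrow> real) \<Rightarrow> bool" where
  "in_Lp p f \<longleftrightarrow> f \<in> borel_measurable lebesgue \<and> integrable lebesgue (\<lambda>x. \<bar>f x\<bar> powr p)"

definition Lp_norm :: "real \<Rightarrow> ('a::euclidean_space \<Rightarrow> real) \<Rightarrow> real" where
  "Lp_norm p f = (LINT x|lebesgue. \<bar>f x\<bar> powr p) powr (1 / p)"

definition besov_semi :: "real \<Rightarrow> real \<Rightarrow> ('a::euclidean_space \<Rightarrow> real) \<Rightarrow> ereal" where
  "besov_semi s p f = (SUP h\<in>-{0}. ereal (norm h powr (-s) * Lp_norm p (\<lambda>x. f (x + h) - f x)))"

definition nikolskii_semi :: "real \<Rightarrow> real \<Rightarrow> ('a::euclidean_space \<Rightarrow> real) \<Rightarrow> ereal" where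
  "nikolskii_semi s p f = Limsup (at 0) (\<lambda>h. ereal (norm h powr (-s) * Lp_norm p (\<lambda>x. f (x + h) - f x)))"

text \<open>The common underlying set of B^s_{p,\<infinity>} and N^{s,p}.\<close>
definition besov_space :: "real \<Rightarrow> real \<Rightarrow> ('a::euclidean_space \<Rightarrow> real) set" where
  "besov_space s p = {f. in_Lp p f \<and> besov_semi s p f < \<infinity>}"

definition besov_norm :: "real \<Rightarrow> real \<Rightarrow> ('a::euclidean_space \<Rightarrow> real) \<Rightarrow> ereal" where
  "besov_norm s p f = ereal (Lp_norm p f) + besov_semi s p f"

definition nikolskii_norm :: "real \<Rightarrow> real \<Rightarrow> ('a::euclidean_space \<Rightarrow> real) \<Rightarrow> ereal" where
  "nikolskii_norm s p f = ereal (Lp_norm p f) + nikolskii_semi s p f"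

definition besov_zero :: "real \<Rightarrow> real \<Rightarrow> ('a::euclidean_space \<Rightarrow> real) set" where
  "besov_zero s p = {f \<in> besov_space s p.
     \<forall>\<epsilon>>0. \<exists>g\<in>Cc_inf. besov_norm s p (\<lambda>x. f x - g x) < ereal \<epsilon>}"

definition nikolskii_zero :: "real \<Rightarrow> real \<Rightarrow> ('a::euclidean_space \<Rightarrow> real) set" where
  "nikolskii_zero s p = {f \<in> besov_space s p.
     \<forall>\<epsilon>>0. \<exists>g\<in>Cc_inf. nikolskii_norm s p (\<lambda>x. f x - g x) < ereal \<epsilon>}"

end

theory Submission
  imports Defs
begin

text \<open>
  Since the Nikolskii seminorm is a limsup of the quantities whose supremum is the Besov seminorm,
  approximation in \<open>B\<^sup>s\<^sub>p\<^sub>,\<^sub>\<infinity>\<close> implies approximation in \<open>N\<^sup>s\<^sup>,\<^sup>p\<close>.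

  Conversely, let \<open>f\<close> be a limit of test functions in \<open>N\<^sup>s\<^sup>,\<^sup>p\<close>. A test function \<open>g\<close>
  satisfies \<open>\<parallel>g(\<cdot>+h) - g\<parallel>\<^sub>p = O(|h|)\<close>, so \<open>s < 1\<close> forces
  \<open>|h|\<^sup>-\<^sup>s \<parallel>f(\<cdot>+h) - f\<parallel>\<^sub>p \<rightarrow> 0\<close> as \<open>h \<rightarrow> 0\<close>. Given \<open>\<epsilon>\<close>, choose \<open>\<delta>\<close> such that this
  quantity is below \<open>\<epsilon>\<close> for \<open>|h| < \<delta>\<close>, then a mollifier \<open>\<rho>\<close> supported in a ball of radius
  \<open>t\<close> so small that \<open>\<parallel>f - \<rho>\<star>f\<parallel>\<^sub>p \<le> [f]\<^sub>B t\<^sup>s\<close> is below \<open>\<epsilon> \<delta>\<^sup>s\<close>, and only then a test function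
  \<open>g\<close> with \<open>\<parallel>f - g\<parallel>\<^sub>p\<close> small compared with the \<open>L\<^sup>1\<close> modulus of continuity of \<open>\<rho>\<close>.
  The test function \<open>\<rho>\<star>g\<close> approximates \<open>f\<close> in the Besov norm, because
  \<open>f - \<rho>\<star>g = (f - \<rho>\<star>f) + \<rho>\<star>(f - g)\<close>: the differences of the first term are
  controlled by those of \<open>f\<close> when \<open>|h| < \<delta>\<close> and by \<open>\<parallel>f - \<rho>\<star>f\<parallel>\<^sub>p\<close> otherwise, and those of
  the second term by \<open>\<parallel>\<rho>(\<cdot>-h) - \<rho>\<parallel>\<^sub>1 \<parallel>f - g\<parallel>\<^sub>p = O(|h|) \<parallel>f - g\<parallel>\<^sub>p\<close>.
\<close>

lemma powr_ge_tangent: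
  fixes p a z :: real
  assumes p: "1 \<le> p" and a: "0 \<le> a" and z: "0 \<le> z"
  shows "a powr p + p * a powr (p - 1) * (z - a) \<le> z powr p"
proof -
  consider "a = 0" | "0 < a" "z = 0" | "0 < a" "0 < z" using a z by linarith
  then show ?thesis
  proof cases
    case 1
    thus ?thesis using p by simp
  next
    case 2
    have "a powr p + p * a powr (p - 1) * (z - a) = (1 - p) * a powr p"
      using 2 by (simp add: powr_diff algebra_simps)
    also have "\<dots> \<le> 0" using p by (simp add: mult_nonpos_nonneg)
    finally show ?thesis using 2 by simp
  next
    case 3
    have "((\<lambda>x. x powr p) has_field_derivative p * a powr (p - 1)) (at a within {0<..})"
      using 3 by (auto intro!: derivative_eq_intros)
    hence "p * a powr (p - 1) * (z - a) \<le> z powr p - a powr p"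
      using 3 by (intro convex_on_imp_above_tangent[OF powr_convex[OF p]]) (auto simp: interior_open)
    thus ?thesis by simp
  qed
qed

lemma powr_convex_combination_le:
  fixes p x y l :: real
  assumes p: "1 \<le> p" and "0 \<le> x" "0 \<le> y" "0 \<le> l" "l \<le> 1"
  shows "(l * x + (1 - l) * y) powr p \<le> l * x powr p + (1 - l) * y powr p"
proof -
  define m where "m = l * x + (1 - l) * y"
  have m: "0 \<le> m" using assms by (simp add: m_def)
  have 1: "m powr p + p * m powr (p - 1) * (x - m) \<le> x powr p" by (rule powr_ge_tangent) (use assms m in auto)
  have 2: "m powr p + p * m powr (p - 1) * (y - m) \<le> y powr p" by (rule powr_ge_tangent) (use assms m in auto)
  have "l * (m powr p + p * m powr (p - 1) * (x - m)) + (1 - l) * (m powr p + p * m powr (p - 1) * (y - m))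
        \<le> l * x powr p + (1 - l) * y powr p"
    using 1 2 assms by (intro add_mono mult_left_mono) auto
  moreover have "l * (m powr p + p * m powr (p - 1) * (x - m))
      + (1 - l) * (m powr p + p * m powr (p - 1) * (y - m))
        = m powr p"
    by (simp add: m_def algebra_simps)
  ultimately show ?thesis by (simp add: m_def)
qed

lemma powr_add_le:
  fixes p x y :: real
  assumes p: "1 \<le> p" and "0 \<le> x" "0 \<le> y"
  shows "(x + y) powr p \<le> 2 powr (p - 1) * (x powr p + y powr p)"
proof -
  have "((1/2) * x + (1 - 1/2) * y) powr p \<le> (1/2) * x powr p + (1 - 1/2) * y powr p"
    by (rule powr_convex_combination_le) (use assms in auto)
  hence "((x + y) / 2) powr p \<le> (x powr p + y powr p) / 2" by (simp add: field_simps)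
  hence "(x + y) powr p / 2 powr p \<le> (x powr p + y powr p) / 2"
    using assms by (simp add: powr_divide)
  hence "(x + y) powr p \<le> 2 powr p * ((x powr p + y powr p) / 2)"
    by (simp add: field_simps)
  also have "2 powr p * ((x powr p + y powr p) / 2) = 2 powr (p - 1) * (x powr p + y powr p)"
    by (simp add: powr_diff field_simps)
  finally show ?thesis .
qed

lemma le_one_plus_powr:
  fixes X p :: real assumes "1 \<le> p" "0 \<le> X" shows "X \<le> 1 + X powr p"
proof (cases "X \<le> 1")
  case True thus ?thesis using powr_ge_zero[of X p] by linarith
next
  case False
  hence "X powr 1 \<le> X powr p" using assms by (intro powr_mono) auto
  thus ?thesis using False by simp
qed

lemma abs_add_powr_le_convex_weights:
  fixes a b x y :: real
  assumes p: "1 \<le> p" and a: "0 < a" and b: "0 < b"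
  shows "\<bar>x + y\<bar> powr p \<le>
    a / (a + b) * ((a + b) / a) powr p * \<bar>x\<bar> powr p + b / (a + b) * ((a + b) / b) powr p * \<bar>y\<bar> powr p"
proof -
  define S where "S = a + b"
  have S0: "0 < S" and ab: "1 - a / S = b / S" using a b by (auto simp: S_def field_simps)
  have "\<bar>x + y\<bar> powr p \<le> (\<bar>x\<bar> + \<bar>y\<bar>) powr p"
    using p by (intro powr_mono2) auto
  also have "\<bar>x\<bar> + \<bar>y\<bar> = (a / S) * (S / a * \<bar>x\<bar>) + (1 - a / S) * (S / b * \<bar>y\<bar>)"
    using a b ab S0 by simp
  also have "((a / S) * (S / a * \<bar>x\<bar>) + (1 - a / S) * (S / b * \<bar>y\<bar>)) powr p
      \<le> (a / S) * (S / a * \<bar>x\<bar>) powr p + (1 - a / S) * (S / b * \<bar>y\<bar>) powr p"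
    using a b S0 p by (intro powr_convex_combination_le) (auto simp: S_def field_simps)
  also note ab
  also have "(S / a * \<bar>x\<bar>) powr p = (S / a) powr p * \<bar>x\<bar> powr p"
    using a S0 powr_mult[of "S / a" "\<bar>x\<bar>" p] by simp
  also have "(S / b * \<bar>y\<bar>) powr p = (S / b) powr p * \<bar>y\<bar> powr p"
    using b S0 powr_mult[of "S / b" "\<bar>y\<bar>" p] by simp
  finally show ?thesis by (simp only: S_def mult.assoc)
qed

lemma powr_neg_mult_le:
  fixes h :: "'a::real_normed_vector"
  assumes "h \<noteq> 0" "X \<le> e * norm h powr s"
  shows "norm h powr (-s) * X \<le> e"
proof -
  have pos: "0 < norm h powr s" using assms(1) by simp
  have "norm h powr (-s) * X \<le> norm h powr (-s) * (e * norm h powr s)"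
    using assms(2) by (intro mult_left_mono) auto
  also have "\<dots> = e" using pos by (simp add: powr_minus field_simps)
  finally show ?thesis .
qed

lemma powr_neg_mult_le_max:
  fixes h :: "'a::real_normed_vector"
  assumes h: "h \<noteq> 0" and s: "0 \<le> s" "s \<le> 1" and a: "0 \<le> a" and L: "0 \<le> L"
    and le_a: "X \<le> a" and le_L: "norm h \<le> 1 \<Longrightarrow> X \<le> L * norm h"
  shows "norm h powr (-s) * X \<le> max a L"
proof (cases "norm h \<le> 1")
  case True
  have "norm h powr (1 - s) \<le> 1" using powr_mono2[of "1 - s" "norm h" 1] True s by simp
  hence "L * norm h powr (1 - s) * norm h powr s \<le> L * norm h powr s"
    using L by (intro mult_right_mono mult_left_le) auto
  moreover have "L * norm h = L * norm h powr (1 - s) * norm h powr s"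
    using h by (simp add: powr_diff field_simps)
  ultimately have "X \<le> L * norm h powr s" using le_L[OF True] by linarith
  also have "\<dots> \<le> max a L * norm h powr s" by (intro mult_right_mono) auto
  finally show ?thesis by (rule powr_neg_mult_le[OF h])
next
  case False
  hence "1 \<le> norm h powr s" using s by (simp add: ge_one_powr_ge_zero)
  hence "a * 1 \<le> max a L * norm h powr s" using a by (intro mult_mono) auto
  hence "X \<le> max a L * norm h powr s" using le_a by linarith
  thus ?thesis by (rule powr_neg_mult_le[OF h])
qed

lemma exists_pos_mult_powr_le:
  fixes B m s :: real
  assumes "0 \<le> B" "0 < m" "0 < s"
  obtains t where "0 < t" "B * t powr s \<le> m"
proof -
  define t where "t = (m / (B + 1)) powr (1 / s)"
  have "t powr s = m / (B + 1)" using assms by (simp add: t_def powr_powr)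
  have "B * t powr s \<le> (B + 1) * t powr s" by (simp add: distrib_right)
  also have "\<dots> = m" using \<open>t powr s = m / (B + 1)\<close> assms by simp
  finally have "B * t powr s \<le> m" .
  moreover have "0 < t" using assms by (simp add: t_def)
  ultimately show thesis by (rule that[rotated])
qed

section \<open>Minkowski's and Jensen's inequalities\<close>

lemma integrable_abs_powr_add:
  fixes u v :: "'b \<Rightarrow> real"
  assumes p: "1 \<le> p" and [measurable]: "u \<in> borel_measurable M" "v \<in> borel_measurable M"
    and iu: "integrable M (\<lambda>x. \<bar>u x\<bar> powr p)" and iv: "integrable M (\<lambda>x. \<bar>v x\<bar> powr p)"
  shows "integrable M (\<lambda>x. \<bar>u x + v x\<bar> powr p)"
proof (rule Bochner_Integration.integrable_bound)
  show "integrable M (\<lambda>x. 2 powr (p - 1) * (\<bar>u x\<bar> powr p + \<bar>v x\<bar> powr p))"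
    using iu iv by auto
  show "(\<lambda>x. \<bar>u x + v x\<bar> powr p) \<in> borel_measurable M" by measurable
  show "AE x in M. norm (\<bar>u x + v x\<bar> powr p) \<le> norm (2 powr (p - 1) * (\<bar>u x\<bar> powr p + \<bar>v x\<bar> powr p))"
  proof (intro AE_I2)
    fix x
    have "\<bar>u x + v x\<bar> powr p \<le> (\<bar>u x\<bar> + \<bar>v x\<bar>) powr p"
      using p by (intro powr_mono2) auto
    also have "\<dots> \<le> 2 powr (p - 1) * (\<bar>u x\<bar> powr p + \<bar>v x\<bar> powr p)"
      using p by (intro powr_add_le) auto
    finally show "norm (\<bar>u x + v x\<bar> powr p) \<le> norm (2 powr (p - 1) * (\<bar>u x\<bar> powr p + \<bar>v x\<bar> powr p))"
      by simp
  qed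
qed

lemma AE_zero_if_integral_abs_powr_eq_0:
  fixes u :: "'b \<Rightarrow> real"
  assumes iu: "integrable M (\<lambda>x. \<bar>u x\<bar> powr p)" and z: "(\<integral>x. \<bar>u x\<bar> powr p \<partial>M) = 0"
  shows "AE x in M. u x = 0"
proof -
  have "AE x in M. \<bar>u x\<bar> powr p = 0"
    using integral_nonneg_eq_0_iff_AE[OF iu] z by auto
  thus ?thesis by eventually_elim auto
qed

lemma Minkowski_inequality:
  fixes u v :: "'b \<Rightarrow> real"
  assumes p: "1 \<le> p" and [measurable]: "u \<in> borel_measurable M" "v \<in> borel_measurable M"
    and iu: "integrable M (\<lambda>x. \<bar>u x\<bar> powr p)" and iv: "integrable M (\<lambda>x. \<bar>v x\<bar> powr p)"
  shows "(\<integral>x. \<bar>u x + v x\<bar> powr p \<partial>M) powr (1/p)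
     \<le> (\<integral>x. \<bar>u x\<bar> powr p \<partial>M) powr (1/p) + (\<integral>x. \<bar>v x\<bar> powr p \<partial>M) powr (1/p)"
proof -
  define Iu where "Iu = (\<integral>x. \<bar>u x\<bar> powr p \<partial>M)"
  define Iv where "Iv = (\<integral>x. \<bar>v x\<bar> powr p \<partial>M)"
  have iuv: "integrable M (\<lambda>x. \<bar>u x + v x\<bar> powr p)" by (rule integrable_abs_powr_add) (use assms in auto)
  have "0 \<le> Iu" "0 \<le> Iv" unfolding Iu_def Iv_def by auto
  then consider "Iu = 0" | "Iv = 0" | "0 < Iu" "0 < Iv" by linarith
  then show ?thesis
  proof cases
    case 1
    have "AE x in M. u x = 0" using AE_zero_if_integral_abs_powr_eq_0[OF iu] 1 Iu_def by auto
    hence "(\<integral>x. \<bar>u x + v x\<bar> powr p \<partial>M) = Iv" unfolding Iv_def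
      by (intro integral_cong_AE) auto
    thus ?thesis using 1 by (simp add: Iu_def[symmetric] Iv_def[symmetric])
  next
    case 2
    have "AE x in M. v x = 0" using AE_zero_if_integral_abs_powr_eq_0[OF iv] 2 Iv_def by auto
    hence "(\<integral>x. \<bar>u x + v x\<bar> powr p \<partial>M) = Iu" unfolding Iu_def
      by (intro integral_cong_AE) auto
    thus ?thesis using 2 by (simp add: Iu_def[symmetric] Iv_def[symmetric])
  next
    case 3
    define a where "a = Iu powr (1/p)"
    define b where "b = Iv powr (1/p)"
    have a0: "0 < a" "a powr p = Iu" using 3 p by (simp_all add: a_def powr_powr)
    have b0: "0 < b" "b powr p = Iv" using 3 p by (simp_all add: b_def powr_powr)
    define S where "S = a + b"
    have S0: "0 < S" using a0 b0 by (simp add: S_def)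
    have "(\<integral>x. \<bar>u x + v x\<bar> powr p \<partial>M) \<le>
        (\<integral>x. (a / S) * (S / a) powr p * \<bar>u x\<bar> powr p + (b / S) * (S / b) powr p * \<bar>v x\<bar> powr p \<partial>M)"
      using iuv iu iv abs_add_powr_le_convex_weights[OF p a0(1) b0(1)]
      by (intro integral_mono) (auto simp: S_def)
    also have "\<dots> = (a / S) * (S / a) powr p * Iu + (b / S) * (S / b) powr p * Iv"
      using iu iv by (simp add: Iu_def Iv_def)
    also have "(a / S) * (S / a) powr p * Iu = a * S powr (p - 1)"
      using a0(1) S0 by (simp add: a0(2)[symmetric] powr_divide powr_diff field_simps)
    also have "(b / S) * (S / b) powr p * Iv = b * S powr (p - 1)"
      using b0(1) S0 by (simp add: b0(2)[symmetric] powr_divide powr_diff field_simps)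
    also have "a * S powr (p - 1) + b * S powr (p - 1) = S powr p"
      using S0 by (simp add: S_def[symmetric] powr_diff field_simps flip: distrib_right)
    finally have "(\<integral>x. \<bar>u x + v x\<bar> powr p \<partial>M) powr (1/p) \<le> (S powr p) powr (1/p)"
      using p by (intro powr_mono2) auto
    also have "(S powr p) powr (1/p) = S" using S0 p by (simp add: powr_powr)
    finally show ?thesis by (simp add: S_def a_def b_def Iu_def Iv_def)
  qed
qed

lemma weighted_Jensen_powr:
  fixes w X :: "'b \<Rightarrow> real"
  assumes p: "1 \<le> p" and [measurable]: "w \<in> borel_measurable M" "X \<in> borel_measurable M"
    and w0: "\<And>y. 0 \<le> w y" and X0: "\<And>y. 0 \<le> X y" and iw: "integrable M w"
    and W: "0 < (\<integral>y. w y \<partial>M)" and iwX: "integrable M (\<lambda>y. w y * X y powr p)"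
  shows "integrable M (\<lambda>y. w y * X y)"
    "(\<integral>y. w y * X y \<partial>M) powr p \<le> (\<integral>y. w y \<partial>M) powr (p - 1) * (\<integral>y. w y * X y powr p \<partial>M)"
proof -
  define Wt where "Wt = (\<integral>y. w y \<partial>M)"
  show i1: "integrable M (\<lambda>y. w y * X y)"
  proof (rule Bochner_Integration.integrable_bound[of _ "\<lambda>y. w y + w y * X y powr p"])
    show "integrable M (\<lambda>y. w y + w y * X y powr p)" using iw iwX by auto
    show "AE y in M. norm (w y * X y) \<le> norm (w y + w y * X y powr p)"
    proof (intro AE_I2)
      fix y
      have "w y * X y \<le> w y * (1 + X y powr p)"
        using w0 X0 p le_one_plus_powr by (intro mult_left_mono) auto
      thus "norm (w y * X y) \<le> norm (w y + w y * X y powr p)"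
        using w0[of y] X0[of y] by (simp add: algebra_simps)
    qed
  qed simp
  define m where "m = (\<integral>y. w y * X y \<partial>M) / Wt"
  have m0: "0 \<le> m" unfolding m_def Wt_def using W w0 X0 by (intro divide_nonneg_pos integral_nonneg) auto
  have pt: "w y * (m powr p + p * m powr (p - 1) * (X y - m)) \<le> w y * X y powr p" for y
    using w0 p m0 X0 by (intro mult_left_mono powr_ge_tangent) auto
  have eqp: "w y * (m powr p + p * m powr (p - 1) * (X y - m))
      = (m powr p - p * m powr (p - 1) * m) * w y + (p * m powr (p - 1)) * (w y * X y)" for y
    by (simp add: algebra_simps)
  have "(\<integral>y. (m powr p - p * m powr (p - 1) * m) * w y + (p * m powr (p - 1)) * (w y * X y) \<partial>M)
     \<le> (\<integral>y. w y * X y powr p \<partial>M)"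
    using pt iw i1 iwX eqp by (intro integral_mono) auto
  moreover have "(\<integral>y. (m powr p - p * m powr (p - 1) * m) * w y + (p * m powr (p - 1)) * (w y * X y) \<partial>M)
      = (m powr p - p * m powr (p - 1) * m) * Wt + (p * m powr (p - 1)) * (\<integral>y. w y * X y \<partial>M)"
    using iw i1 by (simp add: Wt_def)
  moreover have "(\<integral>y. w y * X y \<partial>M) = m * Wt" using W by (simp add: m_def Wt_def)
  ultimately have key: "Wt * m powr p \<le> (\<integral>y. w y * X y powr p \<partial>M)"
    by (simp add: algebra_simps)
  have "(\<integral>y. w y * X y \<partial>M) powr p = Wt powr p * m powr p"
    using \<open>(\<integral>y. w y * X y \<partial>M) = m * Wt\<close> m0 W by (simp add: powr_mult Wt_def mult.commute)
  also have "\<dots> = Wt powr (p - 1) * (Wt * m powr p)"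
    using W by (simp add: Wt_def powr_diff field_simps)
  also have "\<dots> \<le> Wt powr (p - 1) * (\<integral>y. w y * X y powr p \<partial>M)"
    using key by (intro mult_left_mono) auto
  finally show "(\<integral>y. w y * X y \<partial>M) powr p \<le> (\<integral>y. w y \<partial>M) powr (p - 1) * (\<integral>y. w y * X y powr p \<partial>M)"
    by (simp add: Wt_def)
qed

lemma ennreal_powr_abs_integral_le:
  fixes c F :: "'b \<Rightarrow> real"
  assumes p: "1 \<le> p" and [measurable]: "c \<in> borel_measurable M" "F \<in> borel_measurable M"
    and ic: "integrable M c" and W: "0 < (\<integral>y. \<bar>c y\<bar> \<partial>M)"
  shows "ennreal (\<bar>\<integral>y. c y * F y \<partial>M\<bar> powr p)
    \<le> ennreal ((\<integral>y. \<bar>c y\<bar> \<partial>M) powr (p - 1)) * (\<integral>\<^sup>+y. ennreal (\<bar>c y\<bar> * \<bar>F y\<bar> powr p) \<partial>M)"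
proof (cases "(\<integral>\<^sup>+y. ennreal (\<bar>c y\<bar> * \<bar>F y\<bar> powr p) \<partial>M) = \<infinity>")
  case True
  thus ?thesis using W by (simp add: ennreal_mult_top)
next
  case False
  have iwX: "integrable M (\<lambda>y. \<bar>c y\<bar> * \<bar>F y\<bar> powr p)"
    by (rule integrableI_nonneg) (use False in \<open>auto simp: top.not_eq_extremum\<close>)
  have "\<bar>\<integral>y. c y * F y \<partial>M\<bar> powr p \<le> (\<integral>y. \<bar>c y\<bar> * \<bar>F y\<bar> \<partial>M) powr p"
    using integral_abs_bound[of M "\<lambda>y. c y * F y"] p by (intro powr_mono2) (auto simp: abs_mult)
  also have "\<dots> \<le> (\<integral>y. \<bar>c y\<bar> \<partial>M) powr (p - 1) * (\<integral>y. \<bar>c y\<bar> * \<bar>F y\<bar> powr p \<partial>M)"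
    using weighted_Jensen_powr[of p "\<lambda>y. \<bar>c y\<bar>" M "\<lambda>y. \<bar>F y\<bar>"] p ic W iwX by auto
  finally show ?thesis
    using nn_integral_eq_integral[OF iwX] W by (simp add: ennreal_mult[symmetric])
qed

section \<open>\<open>L\<^sup>p\<close> norms with respect to Lebesgue--Borel measure\<close>

lemma lborel_integral_translate:
  fixes F :: "'a::euclidean_space \<Rightarrow> real"
  assumes [measurable]: "F \<in> borel_measurable borel"
  shows "(\<integral>x. F (x + c) \<partial>lborel) = (\<integral>x. F x \<partial>lborel)"
proof -
  have "(\<integral>x. F x \<partial>lborel) = (\<integral>x. F x \<partial>(distr lborel borel ((+) c)))"
    by (simp add: lborel_distr_plus)
  also have "\<dots> = (\<integral>x. F (c + x) \<partial>lborel)" by (rule integral_distr) auto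
  finally show ?thesis by (simp add: add.commute)
qed

lemma lborel_integrable_translate:
  fixes F :: "'a::euclidean_space \<Rightarrow> real"
  assumes [measurable]: "F \<in> borel_measurable borel"
  shows "integrable lborel (\<lambda>x. F (x + c)) \<longleftrightarrow> integrable lborel F"
proof -
  have "integrable lborel F \<longleftrightarrow> integrable (distr lborel borel ((+) c)) F"
    by (simp add: lborel_distr_plus)
  also have "\<dots> \<longleftrightarrow> integrable lborel (\<lambda>x. F (c + x))" by (rule integrable_distr_eq) auto
  finally show ?thesis by (simp add: add.commute)
qed

text \<open>Counterparts of \<open>in_Lp\<close> and \<open>Lp_norm\<close> for Borel functions and Lebesgue--Borel measure,
  where translation invariance and Fubini's theorem are at hand; \<open>Lp_norm_eq_if_AE\<close> below
  relates them to the originals through a Borel representative.\<close>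

definition in_Lp_lborel :: "real \<Rightarrow> ('a::euclidean_space \<Rightarrow> real) \<Rightarrow> bool" where
  "in_Lp_lborel p u \<longleftrightarrow> integrable lborel (\<lambda>x. \<bar>u x\<bar> powr p)"

definition Lp_norm_lborel :: "real \<Rightarrow> ('a::euclidean_space \<Rightarrow> real) \<Rightarrow> real" where
  "Lp_norm_lborel p u = (\<integral>x. \<bar>u x\<bar> powr p \<partial>lborel) powr (1/p)"

lemma Lp_norm_lborel_nonneg: "0 \<le> Lp_norm_lborel p u" by (simp add: Lp_norm_lborel_def)

lemma Lp_norm_lborel_one: "Lp_norm_lborel 1 u = (\<integral>x. \<bar>u x\<bar> \<partial>lborel)"
  by (simp add: Lp_norm_lborel_def)

lemma Lp_lborel_zero:
  "0 < p \<Longrightarrow> Lp_norm_lborel p (\<lambda>x::'a::euclidean_space. 0) = 0"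
  "in_Lp_lborel p (\<lambda>x::'a::euclidean_space. 0)"
  by (simp_all add: Lp_norm_lborel_def in_Lp_lborel_def)

lemma Lp_lborel_add:
  fixes u v :: "'a::euclidean_space \<Rightarrow> real"
  assumes p: "1 \<le> p" and [measurable]: "u \<in> borel_measurable borel" "v \<in> borel_measurable borel"
    and "in_Lp_lborel p u" "in_Lp_lborel p v"
  shows "in_Lp_lborel p (\<lambda>x. u x + v x)"
    "Lp_norm_lborel p (\<lambda>x. u x + v x) \<le> Lp_norm_lborel p u + Lp_norm_lborel p v"
  using assms integrable_abs_powr_add[of p u lborel v] Minkowski_inequality[of p u lborel v]
  by (auto simp: in_Lp_lborel_def Lp_norm_lborel_def)

lemma Lp_lborel_uminus:
  "Lp_norm_lborel p (\<lambda>x. - u x) = Lp_norm_lborel p u" "in_Lp_lborel p (\<lambda>x. - u x) = in_Lp_lborel p u"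
  by (simp_all add: Lp_norm_lborel_def in_Lp_lborel_def)

lemma Lp_lborel_diff:
  fixes u v :: "'a::euclidean_space \<Rightarrow> real"
  assumes p: "1 \<le> p" and [measurable]: "u \<in> borel_measurable borel" "v \<in> borel_measurable borel"
    and "in_Lp_lborel p u" "in_Lp_lborel p v"
  shows "in_Lp_lborel p (\<lambda>x. u x - v x)"
    "Lp_norm_lborel p (\<lambda>x. u x - v x) \<le> Lp_norm_lborel p u + Lp_norm_lborel p v"
  using Lp_lborel_add[of p u "\<lambda>x. - v x"] assms by (auto simp: Lp_lborel_uminus)

lemma Lp_lborel_translate:
  fixes u :: "'a::euclidean_space \<Rightarrow> real"
  assumes [measurable]: "u \<in> borel_measurable borel"
  shows "Lp_norm_lborel p (\<lambda>x. u (x + c)) = Lp_norm_lborel p u"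
    "in_Lp_lborel p (\<lambda>x. u (x + c)) = in_Lp_lborel p u"
  unfolding Lp_norm_lborel_def in_Lp_lborel_def
  using lborel_integral_translate[of "\<lambda>x. \<bar>u x\<bar> powr p" c] lborel_integrable_translate[of "\<lambda>x. \<bar>u x\<bar> powr p" c]
  by auto

lemma Lp_norm_lborel_cmult:
  fixes u :: "'a::euclidean_space \<Rightarrow> real"
  assumes p: "0 < p"
  shows "Lp_norm_lborel p (\<lambda>x. c * u x) = \<bar>c\<bar> * Lp_norm_lborel p u"
proof -
  have "(\<integral>x. \<bar>c * u x\<bar> powr p \<partial>lborel) = \<bar>c\<bar> powr p * (\<integral>x. \<bar>u x\<bar> powr p \<partial>lborel)"
    by (simp add: abs_mult powr_mult)
  moreover have "(\<bar>c\<bar> powr p * I) powr (1/p) = \<bar>c\<bar> * I powr (1/p)" if "0 \<le> I" for I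
    using p that by (simp add: powr_mult powr_powr)
  ultimately show ?thesis unfolding Lp_norm_lborel_def by simp
qed

lemma in_Lp_lborel_cmult: "in_Lp_lborel p u \<Longrightarrow> in_Lp_lborel p (\<lambda>x. c * u x)"
  unfolding in_Lp_lborel_def by (simp add: abs_mult powr_mult)

lemma Lp_lborel_mono:
  fixes u v :: "'a::euclidean_space \<Rightarrow> real"
  assumes p: "0 < p" and [measurable]: "u \<in> borel_measurable borel"
    and "in_Lp_lborel p v" and le: "\<And>x. \<bar>u x\<bar> \<le> \<bar>v x\<bar>"
  shows "in_Lp_lborel p u" "Lp_norm_lborel p u \<le> Lp_norm_lborel p v"
proof -
  show i: "in_Lp_lborel p u" unfolding in_Lp_lborel_def
    by (rule Bochner_Integration.integrable_bound[of _ "\<lambda>x. \<bar>v x\<bar> powr p"])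
      (use assms in \<open>auto simp: in_Lp_lborel_def intro!: powr_mono2\<close>)
  have "(\<integral>x. \<bar>u x\<bar> powr p \<partial>lborel) \<le> (\<integral>x. \<bar>v x\<bar> powr p \<partial>lborel)"
    using i assms by (intro integral_mono) (auto simp: in_Lp_lborel_def intro!: powr_mono2)
  thus "Lp_norm_lborel p u \<le> Lp_norm_lborel p v" unfolding Lp_norm_lborel_def using p by (intro powr_mono2) auto
qed

lemma Lp_lborel_translate_diff:
  fixes u :: "'a::euclidean_space \<Rightarrow> real"
  assumes p: "1 \<le> p" and [measurable]: "u \<in> borel_measurable borel" and "in_Lp_lborel p u"
  shows "in_Lp_lborel p (\<lambda>x. u (x + h) - u x)"
    "Lp_norm_lborel p (\<lambda>x. u (x + h) - u x) \<le> 2 * Lp_norm_lborel p u"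
  using Lp_lborel_diff[of p "\<lambda>x. u (x + h)" u] Lp_lborel_translate[where u=u and c=h and p=p] assms by auto

lemma indicator_powr: "0 < p \<Longrightarrow> \<bar>indicator A x :: real\<bar> powr p = indicator A x"
  "0 < p \<Longrightarrow> (indicator A x :: real) powr p = indicator A x"
  by (simp_all add: indicator_def)

lemma Lp_lborel_indicator_cball:
  fixes c :: "'a::euclidean_space"
  assumes p: "0 < p"
  shows "in_Lp_lborel p (indicator (cball c r) :: 'a \<Rightarrow> real)"
    "Lp_norm_lborel p (indicator (cball c r) :: 'a \<Rightarrow> real) = measure lborel (cball c r) powr (1/p)"
proof -
  have i: "integrable lborel (indicator (cball c r) :: 'a \<Rightarrow> real)"
    by (rule integrable_real_indicator) (use emeasure_lborel_cball_finite[of c r] in \<open>auto simp: top.not_eq_extremum\<close>)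
  show "in_Lp_lborel p (indicator (cball c r) :: 'a \<Rightarrow> real)"
    unfolding in_Lp_lborel_def using i p by (simp add: indicator_powr)
  show "Lp_norm_lborel p (indicator (cball c r) :: 'a \<Rightarrow> real) = measure lborel (cball c r) powr (1/p)"
    unfolding Lp_norm_lborel_def using p by (simp add: indicator_powr)
qed

lemma nn_integral_abs_powr_le_if_Lp_norm_le:
  assumes p: "0 < p" and u: "in_Lp_lborel p u" and M: "Lp_norm_lborel p u \<le> M"
  shows "(\<integral>\<^sup>+x. ennreal (\<bar>u x\<bar> powr p) \<partial>lborel) \<le> ennreal (M powr p)"
proof -
  define I where "I = (\<integral>x. \<bar>u x\<bar> powr p \<partial>lborel)"
  have I0: "0 \<le> I" unfolding I_def by auto
  have "I = (I powr (1/p)) powr p" using I0 p by (simp add: powr_powr)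
  also have "\<dots> \<le> M powr p" using p M I0 by (intro powr_mono2) (auto simp: Lp_norm_lborel_def I_def)
  finally have "I \<le> M powr p" .
  moreover have "(\<integral>\<^sup>+x. ennreal (\<bar>u x\<bar> powr p) \<partial>lborel) = ennreal I"
    unfolding I_def using u by (intro nn_integral_eq_integral) (auto simp: in_Lp_lborel_def)
  ultimately show ?thesis by (simp add: ennreal_leI)
qed

lemma Lp_lborel_if_nn_integral_le:
  fixes G :: "'a::euclidean_space \<Rightarrow> real"
  assumes [measurable]: "G \<in> borel_measurable borel" and p: "0 < p" and K: "0 \<le> K"
    and bd: "(\<integral>\<^sup>+x. ennreal (\<bar>G x\<bar> powr p) \<partial>lborel) \<le> ennreal (K powr p)"
  shows "in_Lp_lborel p G" "Lp_norm_lborel p G \<le> K"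
proof -
  show G: "in_Lp_lborel p G" unfolding in_Lp_lborel_def
    by (rule integrableI_nonneg) (use bd in \<open>auto simp: top.not_eq_extremum intro: le_less_trans\<close>)
  have "ennreal (\<integral>x. \<bar>G x\<bar> powr p \<partial>lborel) = (\<integral>\<^sup>+x. ennreal (\<bar>G x\<bar> powr p) \<partial>lborel)"
    by (rule nn_integral_eq_integral[symmetric]) (use G in \<open>auto simp: in_Lp_lborel_def\<close>)
  hence "ennreal (\<integral>x. \<bar>G x\<bar> powr p \<partial>lborel) \<le> ennreal (K powr p)" using bd by simp
  hence "(\<integral>x. \<bar>G x\<bar> powr p \<partial>lborel) \<le> K powr p" by (simp add: ennreal_le_iff)
  hence "Lp_norm_lborel p G \<le> (K powr p) powr (1/p)"
    unfolding Lp_norm_lborel_def using p by (intro powr_mono2) auto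
  also have "\<dots> = K" using p K by (simp add: powr_powr)
  finally show "Lp_norm_lborel p G \<le> K" .
qed

lemma Minkowski_integral_inequality:
  fixes c :: "'a::euclidean_space \<Rightarrow> real" and F :: "'a \<Rightarrow> 'a \<Rightarrow> real"
  assumes p: "1 \<le> p" and [measurable]: "c \<in> borel_measurable borel"
    "case_prod F \<in> borel_measurable (lborel \<Otimes>\<^sub>M lborel)"
    and ic: "integrable lborel c" and M0: "0 \<le> M"
    and Fb: "\<And>y. c y \<noteq> 0 \<Longrightarrow> in_Lp_lborel p (\<lambda>x. F x y) \<and> Lp_norm_lborel p (\<lambda>x. F x y) \<le> M"
  shows "in_Lp_lborel p (\<lambda>x. \<integral>y. c y * F x y \<partial>lborel)"
    "Lp_norm_lborel p (\<lambda>x. \<integral>y. c y * F x y \<partial>lborel) \<le> (\<integral>y. \<bar>c y\<bar> \<partial>lborel) * M"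
proof -
  define G where "G = (\<lambda>x. \<integral>y. c y * F x y \<partial>lborel)"
  define W where "W = (\<integral>y. \<bar>c y\<bar> \<partial>lborel)"
  have "G \<in> borel_measurable lborel" unfolding G_def by measurable
  hence [measurable]: "G \<in> borel_measurable borel" by (simp add: measurable_lborel1)
  have ica: "integrable lborel (\<lambda>y. \<bar>c y\<bar>)" using ic by auto
  have "0 \<le> W" unfolding W_def by auto
  then consider "W = 0" | "0 < W" by linarith
  hence "in_Lp_lborel p G \<and> Lp_norm_lborel p G \<le> W * M"
  proof cases
    case 1
    have "AE y in lborel. \<bar>c y\<bar> = 0" using integral_nonneg_eq_0_iff_AE[OF ica] 1 W_def by auto
    hence "G x = 0" for x unfolding G_def by (intro integral_eq_zero_AE) auto
    hence "G = (\<lambda>x. 0)" by auto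
    thus ?thesis using p 1 by (simp add: Lp_lborel_zero)
  next
    case 2
    have "(\<integral>\<^sup>+x. ennreal (\<bar>G x\<bar> powr p) \<partial>lborel)
        \<le> (\<integral>\<^sup>+x. ennreal (W powr (p - 1)) * (\<integral>\<^sup>+y. ennreal (\<bar>c y\<bar> * \<bar>F x y\<bar> powr p) \<partial>lborel) \<partial>lborel)"
      unfolding G_def W_def using 2 p ic by (intro nn_integral_mono ennreal_powr_abs_integral_le) (auto simp: W_def)
    also have "\<dots> = ennreal (W powr (p - 1)) *
        (\<integral>\<^sup>+x. \<integral>\<^sup>+y. ennreal (\<bar>c y\<bar> * \<bar>F x y\<bar> powr p) \<partial>lborel \<partial>lborel)"
      by (rule nn_integral_cmult) measurable
    also have "(\<integral>\<^sup>+x. \<integral>\<^sup>+y. ennreal (\<bar>c y\<bar> * \<bar>F x y\<bar> powr p) \<partial>lborel \<partial>lborel)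
        = (\<integral>\<^sup>+y. \<integral>\<^sup>+x. ennreal (\<bar>c y\<bar> * \<bar>F x y\<bar> powr p) \<partial>lborel \<partial>lborel)"
      by (rule lborel_pair.Fubini') measurable
    also have "(\<integral>\<^sup>+y. \<integral>\<^sup>+x. ennreal (\<bar>c y\<bar> * \<bar>F x y\<bar> powr p) \<partial>lborel \<partial>lborel)
        \<le> (\<integral>\<^sup>+y. ennreal \<bar>c y\<bar> * ennreal (M powr p) \<partial>lborel)"
    proof (intro nn_integral_mono)
      fix y
      show "(\<integral>\<^sup>+x. ennreal (\<bar>c y\<bar> * \<bar>F x y\<bar> powr p) \<partial>lborel) \<le> ennreal \<bar>c y\<bar> * ennreal (M powr p)"
      proof (cases "c y = 0")
        case False
        have "(\<integral>\<^sup>+x. ennreal \<bar>c y\<bar> * ennreal (\<bar>F x y\<bar> powr p) \<partial>lborel)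
            = ennreal \<bar>c y\<bar> * (\<integral>\<^sup>+x. ennreal (\<bar>F x y\<bar> powr p) \<partial>lborel)"
          by (rule nn_integral_cmult) measurable
        also have "\<dots> \<le> ennreal \<bar>c y\<bar> * ennreal (M powr p)"
          using Fb[OF False] p by (intro mult_left_mono nn_integral_abs_powr_le_if_Lp_norm_le) auto
        finally show ?thesis by (simp add: ennreal_mult)
      qed simp
    qed
    also have "\<dots> = ennreal (W * M powr p)"
      using ica by (simp add: nn_integral_multc nn_integral_eq_integral W_def ennreal_mult)
    finally have "(\<integral>\<^sup>+x. ennreal (\<bar>G x\<bar> powr p) \<partial>lborel) \<le> ennreal (W powr (p - 1)) * ennreal (W * M powr p)"
      by (simp add: mult_left_mono)
    also have "\<dots> = ennreal ((W * M) powr p)"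
      using 2 M0 by (simp add: ennreal_mult[symmetric] powr_mult powr_diff field_simps)
    finally show ?thesis using Lp_lborel_if_nn_integral_le[of G p "W * M"] p 2 M0 by simp
  qed
  thus "in_Lp_lborel p (\<lambda>x. \<integral>y. c y * F x y \<partial>lborel)"
    "Lp_norm_lborel p (\<lambda>x. \<integral>y. c y * F x y \<partial>lborel) \<le> (\<integral>y. \<bar>c y\<bar> \<partial>lborel) * M"
    by (auto simp: G_def W_def)
qed

section \<open>Correlation with an integrable kernel\<close>

text \<open>\<open>corr \<rho> u\<close> is the convolution of \<open>u\<close> with the reflected kernel \<open>\<lambda>y. \<rho> (-y)\<close>.\<close>

definition corr :: "('a::euclidean_space \<Rightarrow> real) \<Rightarrow> ('a \<Rightarrow> real) \<Rightarrow> 'a \<Rightarrow> real" where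
  "corr \<rho> u x = (\<integral>y. \<rho> y * u (x + y) \<partial>lborel)"

lemma corr_measurable[measurable]:
  fixes \<rho> u :: "'a::euclidean_space \<Rightarrow> real"
  assumes [measurable]: "\<rho> \<in> borel_measurable borel" "u \<in> borel_measurable borel"
  shows "corr \<rho> u \<in> borel_measurable borel"
proof -
  have "corr \<rho> u \<in> borel_measurable lborel" unfolding corr_def[abs_def] by measurable
  thus ?thesis by (simp add: measurable_lborel1)
qed

lemma corr_integrable:
  fixes \<rho> u :: "'a::euclidean_space \<Rightarrow> real"
  assumes p: "1 \<le> p" and [measurable]: "\<rho> \<in> borel_measurable borel" "u \<in> borel_measurable borel"
    and bd: "\<And>y. \<bar>\<rho> y\<bar> \<le> R" and ir: "integrable lborel \<rho>" and u: "in_Lp_lborel p u"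
  shows "integrable lborel (\<lambda>y. \<rho> y * u (x + y))"
proof (rule Bochner_Integration.integrable_bound[of _ "\<lambda>y. \<bar>\<rho> y\<bar> + R * \<bar>u (x + y)\<bar> powr p"])
  have "in_Lp_lborel p (\<lambda>y. u (y + x))" using Lp_lborel_translate(2)[of u p x] u by simp
  hence "integrable lborel (\<lambda>y. \<bar>u (x + y)\<bar> powr p)" by (simp add: in_Lp_lborel_def add.commute)
  thus "integrable lborel (\<lambda>y. \<bar>\<rho> y\<bar> + R * \<bar>u (x + y)\<bar> powr p)" using ir by auto
  show "AE y in lborel. norm (\<rho> y * u (x + y)) \<le> norm (\<bar>\<rho> y\<bar> + R * \<bar>u (x + y)\<bar> powr p)"
  proof (intro AE_I2)
    fix y
    have "\<bar>\<rho> y * u (x + y)\<bar> \<le> \<bar>\<rho> y\<bar> * (1 + \<bar>u (x + y)\<bar> powr p)"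
      unfolding abs_mult using le_one_plus_powr[OF p] by (intro mult_left_mono) auto
    also have "\<dots> \<le> \<bar>\<rho> y\<bar> + R * \<bar>u (x + y)\<bar> powr p"
      using bd[of y] by (simp add: algebra_simps mult_right_mono)
    finally show "norm (\<rho> y * u (x + y)) \<le> norm (\<bar>\<rho> y\<bar> + R * \<bar>u (x + y)\<bar> powr p)" by simp
  qed
qed simp

lemma Lp_lborel_corr:
  fixes \<rho> u :: "'a::euclidean_space \<Rightarrow> real"
  assumes p: "1 \<le> p" and [measurable]: "\<rho> \<in> borel_measurable borel" "u \<in> borel_measurable borel"
    and ir: "integrable lborel \<rho>" and u: "in_Lp_lborel p u"
  shows "in_Lp_lborel p (corr \<rho> u)"
    "Lp_norm_lborel p (corr \<rho> u) \<le> (\<integral>y. \<bar>\<rho> y\<bar> \<partial>lborel) * Lp_norm_lborel p u"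
proof -
  have F: "case_prod (\<lambda>x y. u (x + y)) \<in> borel_measurable (lborel \<Otimes>\<^sub>M lborel)" by measurable
  have "\<And>y. in_Lp_lborel p (\<lambda>x. u (x + y)) \<and> Lp_norm_lborel p (\<lambda>x. u (x + y)) \<le> Lp_norm_lborel p u"
    using Lp_lborel_translate[of u] u by simp
  thus "in_Lp_lborel p (corr \<rho> u)" "Lp_norm_lborel p (corr \<rho> u) \<le> (\<integral>y. \<bar>\<rho> y\<bar> \<partial>lborel) * Lp_norm_lborel p u"
    using Minkowski_integral_inequality[of p \<rho> "\<lambda>x y. u (x + y)" "Lp_norm_lborel p u",
        OF p _ F ir Lp_norm_lborel_nonneg]
    unfolding corr_def[abs_def]
    by auto
qed

lemma corr_diff:
  fixes \<rho> u v :: "'a::euclidean_space \<Rightarrow> real"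
  assumes p: "1 \<le> p" and [measurable]: "\<rho> \<in> borel_measurable borel"
    "u \<in> borel_measurable borel" "v \<in> borel_measurable borel"
    and bd: "\<And>y. \<bar>\<rho> y\<bar> \<le> R" and ir: "integrable lborel \<rho>" and u: "in_Lp_lborel p u" and v: "in_Lp_lborel p v"
  shows "corr \<rho> (\<lambda>x. u x - v x) x = corr \<rho> u x - corr \<rho> v x"
  unfolding corr_def using corr_integrable[OF p _ _ bd ir u] corr_integrable[OF p _ _ bd ir v]
  by (simp add: right_diff_distrib)

lemma corr_translate_diff_eq_kernel:
  fixes \<rho> u :: "'a::euclidean_space \<Rightarrow> real"
  assumes p: "1 \<le> p" and [measurable]: "\<rho> \<in> borel_measurable borel" "u \<in> borel_measurable borel"
    and bd: "\<And>y. \<bar>\<rho> y\<bar> \<le> R" and ir: "integrable lborel \<rho>" and u: "in_Lp_lborel p u"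
  shows "corr \<rho> u (x + h) - corr \<rho> u x = corr (\<lambda>y. \<rho> (y - h) - \<rho> y) u x"
proof -
  have "corr \<rho> u (x + h) = (\<integral>y. \<rho> (y - h) * u (x + y) \<partial>lborel)"
    unfolding corr_def
    using lborel_integral_translate[of "\<lambda>y. \<rho> (y - h) * u (x + y)" h]
    by (simp add: algebra_simps)
  moreover have "integrable lborel (\<lambda>y. \<rho> (y - h) * u (x + y))"
  proof -
    have "integrable lborel (\<lambda>y. \<rho> (y + (- h)))" using lborel_integrable_translate[of \<rho> "- h"] ir by simp
    thus ?thesis using corr_integrable[OF p _ _ _ _ u, of "\<lambda>y. \<rho> (y - h)" R x] bd by simp
  qed
  ultimately show ?thesis
    unfolding corr_def using corr_integrable[OF p _ _ bd ir u]
    by (simp add: left_diff_distrib)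
qed

lemma corr_translate_diff_eq:
  fixes \<rho> u :: "'a::euclidean_space \<Rightarrow> real"
  assumes p: "1 \<le> p" and [measurable]: "\<rho> \<in> borel_measurable borel" "u \<in> borel_measurable borel"
    and bd: "\<And>y. \<bar>\<rho> y\<bar> \<le> R" and ir: "integrable lborel \<rho>" and u: "in_Lp_lborel p u"
  shows "corr \<rho> u (x + h) - corr \<rho> u x = corr \<rho> (\<lambda>z. u (z + h) - u z) x"
proof -
  have uh: "in_Lp_lborel p (\<lambda>z. u (z + h))" using Lp_lborel_translate[of u p h] u by simp
  have "corr \<rho> u (x + h) = corr \<rho> (\<lambda>z. u (z + h)) x"
    unfolding corr_def by (simp add: algebra_simps)
  thus ?thesis using corr_diff[OF p _ _ _ bd ir uh u, of x] by simp
qed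

lemma Lp_norm_lborel_sub_corr_le:
  fixes \<rho> f :: "'a::euclidean_space \<Rightarrow> real"
  assumes p: "1 \<le> p" and [measurable]: "\<rho> \<in> borel_measurable borel" "f \<in> borel_measurable borel"
    and bd: "\<And>y. \<bar>\<rho> y\<bar> \<le> R" and ir: "integrable lborel \<rho>" and u: "in_Lp_lborel p f"
    and one: "(\<integral>y. \<rho> y \<partial>lborel) = 1" and M0: "0 \<le> M"
    and Mb: "\<And>y. \<rho> y \<noteq> 0 \<Longrightarrow> Lp_norm_lborel p (\<lambda>x. f (x + y) - f x) \<le> M"
  shows "in_Lp_lborel p (\<lambda>x. f x - corr \<rho> f x)"
    "Lp_norm_lborel p (\<lambda>x. f x - corr \<rho> f x) \<le> (\<integral>y. \<bar>\<rho> y\<bar> \<partial>lborel) * M"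
proof -
  have eq: "f x - corr \<rho> f x = (\<integral>y. \<rho> y * (f x - f (x + y)) \<partial>lborel)" for x
  proof -
    have "f x = (\<integral>y. \<rho> y * f x \<partial>lborel)" using one by simp
    thus ?thesis unfolding corr_def using corr_integrable[OF p _ _ bd ir u] ir
      by (simp add: right_diff_distrib)
  qed
  have F: "case_prod (\<lambda>x y. f x - f (x + y)) \<in> borel_measurable (lborel \<Otimes>\<^sub>M lborel)" by measurable
  have "\<And>y. \<rho> y \<noteq> 0 \<Longrightarrow> in_Lp_lborel p (\<lambda>x. f x - f (x + y)) \<and> Lp_norm_lborel p (\<lambda>x. f x - f (x + y)) \<le> M"
  proof -
    fix y assume "\<rho> y \<noteq> 0"
    have "in_Lp_lborel p (\<lambda>x. f (x + y) - f x)" using Lp_lborel_translate_diff[OF p _ u] by simp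
    moreover have "Lp_norm_lborel p (\<lambda>x. f x - f (x + y)) = Lp_norm_lborel p (\<lambda>x. f (x + y) - f x)"
      using Lp_lborel_uminus(1)[of p "\<lambda>x. f (x + y) - f x"] by simp
    moreover have "in_Lp_lborel p (\<lambda>x. f x - f (x + y)) = in_Lp_lborel p (\<lambda>x. f (x + y) - f x)"
      using Lp_lborel_uminus(2)[of p "\<lambda>x. f (x + y) - f x"] by simp
    ultimately show "in_Lp_lborel p (\<lambda>x. f x - f (x + y)) \<and> Lp_norm_lborel p (\<lambda>x. f x - f (x + y)) \<le> M"
      using Mb[OF \<open>\<rho> y \<noteq> 0\<close>] by simp
  qed
  from Minkowski_integral_inequality[OF p _ F ir M0 this]
  show "in_Lp_lborel p (\<lambda>x. f x - corr \<rho> f x)" "Lp_norm_lborel p (\<lambda>x. f x - corr \<rho> f x) \<le> (\<integral>y. \<bar>\<rho> y\<bar> \<partial>lborel) * M"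
    by (simp_all add: eq)
qed

lemma corr_translate_diff_le:
  fixes \<rho> u :: "'a::euclidean_space \<Rightarrow> real"
  assumes p: "1 \<le> p" and [measurable]: "\<rho> \<in> borel_measurable borel" "u \<in> borel_measurable borel"
    and bd: "\<And>y. \<bar>\<rho> y\<bar> \<le> R" and ir: "integrable lborel \<rho>" and u: "in_Lp_lborel p u"
  shows "Lp_norm_lborel p (\<lambda>x. corr \<rho> u (x + h) - corr \<rho> u x)
    \<le> (\<integral>y. \<bar>\<rho> y\<bar> \<partial>lborel) * Lp_norm_lborel p (\<lambda>x. u (x + h) - u x)"
proof -
  have "(\<lambda>x. corr \<rho> u (x + h) - corr \<rho> u x) = corr \<rho> (\<lambda>x. u (x + h) - u x)"
    using corr_translate_diff_eq[OF p _ _ bd ir u] by auto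
  thus ?thesis
    using Lp_lborel_corr(2)[OF p _ _ ir Lp_lborel_translate_diff(1)[OF p _ u]] by simp
qed

lemma corr_translate_diff_le_kernel:
  fixes \<rho> u :: "'a::euclidean_space \<Rightarrow> real"
  assumes p: "1 \<le> p" and [measurable]: "\<rho> \<in> borel_measurable borel" "u \<in> borel_measurable borel"
    and bd: "\<And>y. \<bar>\<rho> y\<bar> \<le> R" and ir: "integrable lborel \<rho>" and u: "in_Lp_lborel p u"
  shows "Lp_norm_lborel p (\<lambda>x. corr \<rho> u (x + h) - corr \<rho> u x)
    \<le> (\<integral>y. \<bar>\<rho> (y - h) - \<rho> y\<bar> \<partial>lborel) * Lp_norm_lborel p u"
proof -
  have "integrable lborel (\<lambda>y. \<rho> (y + (- h)))"
    using lborel_integrable_translate[of \<rho> "- h"] ir by simp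
  hence "integrable lborel (\<lambda>y. \<rho> (y - h) - \<rho> y)" using ir by simp
  moreover have "(\<lambda>x. corr \<rho> u (x + h) - corr \<rho> u x) = corr (\<lambda>y. \<rho> (y - h) - \<rho> y) u"
    using corr_translate_diff_eq_kernel[OF p _ _ bd ir u] by auto
  ultimately show ?thesis using Lp_lborel_corr(2)[OF p _ _ _ u] by simp
qed

section \<open>Smooth functions with compact support\<close>

lemma smooth_funI:
  assumes "g \<in> S" and dS: "\<And>h. h \<in> S \<Longrightarrow> h differentiable_on UNIV"
    and "\<And>h v. h \<in> S \<Longrightarrow> (\<lambda>x. frechet_derivative h (at x) v) \<in> S"
  shows "smooth_fun g"
proof -
  have "h \<in> S" if "h \<in> iter_derivs g" for h
    using that by (induction rule: iter_derivs.induct) (use assms in auto)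
  thus ?thesis unfolding smooth_fun_def using dS by auto
qed

lemma smooth_fun_iter_derivsD:
  assumes "smooth_fun g" "h \<in> iter_derivs g"
  shows "h differentiable_on UNIV" "continuous_on UNIV h"
    "(\<lambda>x. frechet_derivative h (at x) v) \<in> iter_derivs g"
    "(h has_derivative frechet_derivative h (at x)) (at x)"
proof -
  show d: "h differentiable_on UNIV" using assms by (auto simp: smooth_fun_def)
  thus "continuous_on UNIV h" by (rule differentiable_imp_continuous_on)
  show "(\<lambda>x. frechet_derivative h (at x) v) \<in> iter_derivs g"
    by (rule iter_derivs.step[OF assms(2) d])
  show "(h has_derivative frechet_derivative h (at x)) (at x)"
    using d frechet_derivative_works by (auto simp: differentiable_on_def)
qed

lemma iter_derivs_zero_outside_support:
  assumes "h \<in> iter_derivs g" "x \<notin> closure {x. g x \<noteq> 0}"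
  shows "h x = 0"
  using assms
proof (induction arbitrary: x rule: iter_derivs.induct)
  case base thus ?case using closure_subset[of "{x. g x \<noteq> 0}"] by auto
next
  case (step h v)
  define U where "U = - closure {x. g x \<noteq> 0}"
  have U: "open U" "x \<in> U" using step by (auto simp: U_def)
  have z: "0 = h y" if "y \<in> U" for y using step.IH[of y] that by (simp add: U_def)
  have "((\<lambda>_. 0::real) has_derivative (\<lambda>_. 0)) (at x)" by simp
  hence "(h has_derivative (\<lambda>_. 0)) (at x)"
    by (rule has_derivative_transform_within_open[OF _ U z])
  hence "frechet_derivative h (at x) = (\<lambda>_. 0)" by (rule frechet_derivative_at[symmetric])
  thus ?case by simp
qed

lemma Cc_infD:
  assumes "g \<in> Cc_inf"
  shows "smooth_fun g" "compact (closure {x. g x \<noteq> 0})" "continuous_on UNIV g"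
    "g \<in> borel_measurable borel"
  using assms smooth_fun_iter_derivsD(2)[OF _ iter_derivs.base, of g]
  by (auto simp: Cc_inf_def intro: borel_measurable_continuous_onI)

lemma Cc_inf_iff_bounded_support: "g \<in> Cc_inf \<longleftrightarrow> smooth_fun g \<and> bounded {x. g x \<noteq> 0}"
  by (simp add: Cc_inf_def)

lemma Cc_inf_iter_derivs_bounded:
  assumes "g \<in> Cc_inf" "h \<in> iter_derivs g"
  shows "\<exists>B. \<forall>x. \<bar>h x\<bar> \<le> B"
proof -
  define K where "K = closure {x. g x \<noteq> 0}"
  have K: "compact K" using Cc_infD[OF assms(1)] by (simp add: K_def)
  have c: "continuous_on K h" using smooth_fun_iter_derivsD(2)[OF Cc_infD(1)[OF assms(1)] assms(2)]
    by (rule continuous_on_subset) simp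
  have "compact (h ` K)" using compact_continuous_image[OF c K] .
  then obtain B where B: "\<And>y. y \<in> h ` K \<Longrightarrow> norm y \<le> B" using compact_imp_bounded bounded_iff by metis
  have "\<bar>h x\<bar> \<le> max B 0" for x
  proof (cases "x \<in> K")
    case True thus ?thesis using B[of "h x"] by auto
  next
    case False thus ?thesis using iter_derivs_zero_outside_support[OF assms(2), of x] by (simp add: K_def)
  qed
  thus ?thesis by blast
qed

lemma Cc_inf_iter_derivs_lipschitz:
  assumes "g \<in> Cc_inf" "h \<in> iter_derivs g"
  shows "\<exists>L. \<forall>x y. \<bar>h x - h y\<bar> \<le> L * norm (x - y)"
proof -
  have sm: "smooth_fun g" using Cc_infD[OF assms(1)] by simp
  have "\<forall>b\<in>Basis. \<exists>B. \<forall>x. \<bar>frechet_derivative h (at x) b\<bar> \<le> B"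
    using Cc_inf_iter_derivs_bounded[OF assms(1) smooth_fun_iter_derivsD(3)[OF sm assms(2)]] by blast
  then obtain B where B: "\<And>b x. b \<in> Basis \<Longrightarrow> \<bar>frechet_derivative h (at x) b\<bar> \<le> B b" by metis
  define L where "L = (\<Sum>b\<in>Basis. B b)"
  have der: "(h has_derivative frechet_derivative h (at x)) (at x within UNIV)" for x
    using smooth_fun_iter_derivsD(4)[OF sm assms(2)] by simp
  have on: "onorm (frechet_derivative h (at x)) \<le> L" for x
  proof -
    have bl: "bounded_linear (frechet_derivative h (at x))"
      using der[of x] has_derivative_bounded_linear by blast
    have "onorm (frechet_derivative h (at x)) \<le> (\<Sum>b\<in>Basis. norm (frechet_derivative h (at x) b))"
      by (rule onorm_componentwise[OF bl])
    also have "\<dots> \<le> L" unfolding L_def using B by (intro sum_mono) auto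
    finally show ?thesis .
  qed
  have "norm (h x - h y) \<le> L * norm (x - y)" for x y
    by (rule differentiable_bound[OF convex_UNIV der on]) auto
  thus ?thesis by auto
qed

lemma Cc_inf_bounded_support:
  assumes "g \<in> Cc_inf"
  obtains R where "0 < R" "\<And>x. R < norm x \<Longrightarrow> g x = 0"
proof -
  obtain R where R: "\<And>x. g x \<noteq> 0 \<Longrightarrow> norm x \<le> R"
    using assms unfolding Cc_inf_iff_bounded_support bounded_iff by auto
  show thesis
  proof (rule that[of "max R 1"])
    show "g x = 0" if "max R 1 < norm x" for x using R[of x] that by linarith
  qed simp
qed

lemma Cc_inf_support_in_cbox:
  assumes "g \<in> Cc_inf"
  obtains a b where "\<And>t. t \<notin> cbox a b \<Longrightarrow> g t = 0"
proof -
  obtain a b where "{x. g x \<noteq> 0} \<subseteq> cbox a b"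
    using assms bounded_subset_cbox_symmetric unfolding Cc_inf_iff_bounded_support by metis
  thus thesis using that by blast
qed

lemma Cc_inf_in_Lp_lborel:
  fixes g :: "'a::euclidean_space \<Rightarrow> real"
  assumes "g \<in> Cc_inf" "0 < p"
  shows "in_Lp_lborel p g" "integrable lborel g"
proof -
  obtain B where B: "\<And>x. \<bar>g x\<bar> \<le> B" using Cc_inf_iter_derivs_bounded[OF assms(1) iter_derivs.base] by blast
  obtain R where R: "\<And>x. norm x > R \<Longrightarrow> g x = 0" using Cc_inf_bounded_support[OF assms(1)] by blast
  have B0: "0 \<le> B" using B[of 0] by simp
  have le: "\<bar>g x\<bar> \<le> \<bar>B * indicator (cball 0 R) x\<bar>" for x
    using B[of x] R[of x] B0 by (cases "norm x > R") (auto simp: indicator_def dist_norm)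
  have gm[measurable]: "g \<in> borel_measurable borel" using Cc_infD[OF assms(1)] by simp
  show "in_Lp_lborel p g"
    using Lp_lborel_mono(1)[OF assms(2) gm in_Lp_lborel_cmult[OF Lp_lborel_indicator_cball(1)[OF assms(2)]] le]
    by simp
  have "in_Lp_lborel 1 g"
    using Lp_lborel_mono(1)[OF _ gm in_Lp_lborel_cmult[OF Lp_lborel_indicator_cball(1)] le] by simp
  hence "integrable lborel (\<lambda>x. \<bar>g x\<bar>)" unfolding in_Lp_lborel_def by simp
  thus "integrable lborel g" using integrable_abs_iff[of g lborel] by simp
qed

lemma Cc_inf_kernel:
  fixes \<rho> :: "'a::euclidean_space \<Rightarrow> real"
  assumes "\<rho> \<in> Cc_inf"
  obtains R where "\<rho> \<in> borel_measurable borel" "integrable lborel \<rho>" "\<And>y. \<bar>\<rho> y\<bar> \<le> R"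
proof -
  obtain R where "\<And>y. \<bar>\<rho> y\<bar> \<le> R" using Cc_inf_iter_derivs_bounded[OF assms iter_derivs.base] by blast
  thus thesis by (rule that[OF Cc_infD(4)[OF assms] Cc_inf_in_Lp_lborel(2)[OF assms zero_less_one]])
qed

lemma Cc_inf_translate_diff_le:
  fixes g :: "'a::euclidean_space \<Rightarrow> real"
  assumes g: "g \<in> Cc_inf" and p: "0 < p"
  obtains C where "0 \<le> C" "\<And>h. norm h \<le> 1 \<Longrightarrow> Lp_norm_lborel p (\<lambda>x. g (x + h) - g x) \<le> C * norm h"
proof -
  obtain L0 where L0: "\<And>x y. \<bar>g x - g y\<bar> \<le> L0 * norm (x - y)"
    using Cc_inf_iter_derivs_lipschitz[OF g iter_derivs.base] by blast
  define L where "L = max L0 0"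
  have L: "\<bar>g x - g y\<bar> \<le> L * norm (x - y)" for x y
    using order.trans[OF L0 mult_right_mono[OF max.cobounded1 norm_ge_zero]] by (simp add: L_def)
  obtain R where R: "\<And>x. norm x > R \<Longrightarrow> g x = 0" using Cc_inf_bounded_support[OF g] by blast
  have [measurable]: "g \<in> borel_measurable borel" using Cc_infD[OF g] by simp
  define C where "C = L * measure lborel (cball (0::'a) (R + 1)) powr (1/p)"
  have "Lp_norm_lborel p (\<lambda>x. g (x + h) - g x) \<le> C * norm h" if h: "norm h \<le> 1" for h
  proof -
    have le: "\<bar>g (x + h) - g x\<bar> \<le> \<bar>(L * norm h) * indicator (cball 0 (R + 1)) x\<bar>" for x
    proof (cases "norm x \<le> R + 1")
      case True thus ?thesis using L[of "x + h" x] by (simp add: L_def indicator_def)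
    next
      case False
      have "norm x \<le> norm (x + h) + norm h" using norm_triangle_ineq4[of "x + h" h] by simp
      hence "norm (x + h) > R" using False h by linarith
      thus ?thesis using False R[of x] R[of "x + h"] by (simp add: indicator_def)
    qed
    have "Lp_norm_lborel p (\<lambda>x. g (x + h) - g x)
        \<le> Lp_norm_lborel p (\<lambda>x. (L * norm h) * indicator (cball (0::'a) (R + 1)) x)"
      by (rule Lp_lborel_mono(2)[OF p _ in_Lp_lborel_cmult[OF Lp_lborel_indicator_cball(1)[OF p]] le])
        measurable
    also have "\<dots> = C * norm h"
      using Lp_norm_lborel_cmult[OF p, of "L * norm h" "indicator (cball (0::'a) (R + 1))"]
        Lp_lborel_indicator_cball(2)[OF p, of "0::'a" "R + 1"]
      by (simp add: C_def L_def abs_mult)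
    finally show ?thesis .
  qed
  moreover have "0 \<le> C" by (simp add: C_def L_def)
  ultimately show thesis using that by blast
qed

lemma Cc_inf_zero: "(\<lambda>x. 0) \<in> Cc_inf"
proof -
  have "smooth_fun (\<lambda>x::'a. 0::real)"
    by (rule smooth_funI[where S="{\<lambda>x. 0}"]) (auto simp: frechet_derivative_const)
  thus ?thesis by (simp add: Cc_inf_def)
qed

inductive_set deriv_product_sums :: "('a::euclidean_space \<Rightarrow> real) \<Rightarrow> ('a \<Rightarrow> real) \<Rightarrow> ('a \<Rightarrow> real) set"
  for g h where
  mult: "a \<in> iter_derivs g \<Longrightarrow> b \<in> iter_derivs h \<Longrightarrow> (\<lambda>x. a x * b x) \<in> deriv_product_sums g h"
| add: "q1 \<in> deriv_product_sums g h \<Longrightarrow> q2 \<in> deriv_product_sums g h \<Longrightarrow>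
    (\<lambda>x. q1 x + q2 x) \<in> deriv_product_sums g h"

lemma deriv_product_sums_closed:
  assumes g: "smooth_fun g" and h: "smooth_fun h" and "q \<in> deriv_product_sums g h"
  shows "q differentiable_on UNIV \<and> (\<forall>v. (\<lambda>x. frechet_derivative q (at x) v) \<in> deriv_product_sums g h)"
  using assms(3)
proof (induction rule: deriv_product_sums.induct)
  case (mult a b)
  have d: "((\<lambda>x. a x * b x) has_derivative
      (\<lambda>v. a x * frechet_derivative b (at x) v + frechet_derivative a (at x) v * b x)) (at x)" for x
    using has_derivative_mult[OF smooth_fun_iter_derivsD(4)[OF g mult(1)] smooth_fun_iter_derivsD(4)[OF h mult(2)]] .
  show ?case
  proof (intro conjI allI)
    show "(\<lambda>x. a x * b x) differentiable_on UNIV" using d by (auto simp: differentiable_on_def differentiable_def)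
    fix v
    have "(\<lambda>x. a x * frechet_derivative b (at x) v + frechet_derivative a (at x) v * b x) \<in> deriv_product_sums g h"
      using mult smooth_fun_iter_derivsD(3)[OF g] smooth_fun_iter_derivsD(3)[OF h]
      by (intro deriv_product_sums.intros) auto
    moreover have "frechet_derivative (\<lambda>x. a x * b x) (at x) v
        = a x * frechet_derivative b (at x) v + frechet_derivative a (at x) v * b x" for x
      using fun_cong[OF frechet_derivative_at[OF d[of x]], of v] by simp
    ultimately show "(\<lambda>x. frechet_derivative (\<lambda>x. a x * b x) (at x) v) \<in> deriv_product_sums g h" by simp
  qed
next
  case (add q1 q2)
  have d: "((\<lambda>x. q1 x + q2 x) has_derivative
      (\<lambda>v. frechet_derivative q1 (at x) v + frechet_derivative q2 (at x) v)) (at x)" for x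
    using add.IH by (intro has_derivative_add) (auto simp: differentiable_on_def frechet_derivative_works)
  show ?case
  proof (intro conjI allI)
    show "(\<lambda>x. q1 x + q2 x) differentiable_on UNIV" using d by (auto simp: differentiable_on_def differentiable_def)
    fix v
    have "frechet_derivative (\<lambda>x. q1 x + q2 x) (at x) v
        = frechet_derivative q1 (at x) v + frechet_derivative q2 (at x) v" for x
      using fun_cong[OF frechet_derivative_at[OF d[of x]], of v] by simp
    thus "(\<lambda>x. frechet_derivative (\<lambda>x. q1 x + q2 x) (at x) v) \<in> deriv_product_sums g h"
      using add.IH by (simp add: deriv_product_sums.add)
  qed
qed

lemma Cc_inf_mult:
  assumes g: "g \<in> Cc_inf" and h: "h \<in> Cc_inf"
  shows "(\<lambda>x. g x * h x) \<in> Cc_inf"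
proof -
  have "smooth_fun (\<lambda>x. g x * h x)"
    by (rule smooth_funI[where S="deriv_product_sums g h"])
       (use deriv_product_sums_closed[OF Cc_infD(1)[OF g] Cc_infD(1)[OF h]]
         deriv_product_sums.mult[OF iter_derivs.base iter_derivs.base] in auto)
  moreover have "bounded {x. g x * h x \<noteq> 0}"
    using g by (auto simp: Cc_inf_iff_bounded_support intro: bounded_subset)
  ultimately show ?thesis by (simp add: Cc_inf_iff_bounded_support)
qed

lemma Cc_inf_scale:
  fixes g :: "'a::euclidean_space \<Rightarrow> real"
  assumes "g \<in> Cc_inf" "r \<noteq> 0"
  shows "(\<lambda>x. c * g (r *\<^sub>R x)) \<in> Cc_inf"
proof -
  have sm: "smooth_fun g" using Cc_infD[OF assms(1)] by simp
  define S where "S = {f. \<exists>c a. a \<in> iter_derivs g \<and> f = (\<lambda>x. c * a (r *\<^sub>R x))}"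
  have cl: "f differentiable_on UNIV \<and> (\<forall>v. (\<lambda>x. frechet_derivative f (at x) v) \<in> S)" if "f \<in> S" for f
  proof -
    obtain c a where a: "a \<in> iter_derivs g" and f: "f = (\<lambda>x. c * a (r *\<^sub>R x))" using \<open>f \<in> S\<close> S_def by auto
    have da: "(a has_derivative frechet_derivative a (at x)) (at x)" for x using smooth_fun_iter_derivsD(4)[OF sm a] .
    have bl: "linear (frechet_derivative a (at x))" for x using da[of x] has_derivative_linear by blast
    have d: "(f has_derivative (\<lambda>v. c * frechet_derivative a (at (r *\<^sub>R x)) (r *\<^sub>R v))) (at x)" for x
    proof -
      have "((\<lambda>x. r *\<^sub>R x) has_derivative (\<lambda>v. r *\<^sub>R v)) (at x)" by (auto intro!: derivative_eq_intros)
      from has_derivative_compose[OF this da[of "r *\<^sub>R x"]]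
      have "((\<lambda>x. a (r *\<^sub>R x)) has_derivative (\<lambda>v. frechet_derivative a (at (r *\<^sub>R x)) (r *\<^sub>R v))) (at x)"
        by (simp add: o_def)
      from has_derivative_mult_right[OF this, of c] show ?thesis by (simp add: f)
    qed
    have fd: "frechet_derivative f (at x) v = (c * r) * frechet_derivative a (at (r *\<^sub>R x)) v" for x v
      using frechet_derivative_at[OF d[of x]] linear_scale[OF bl[of "r *\<^sub>R x"], of r v] by (metis mult.assoc real_scaleR_def)
    show ?thesis
    proof (intro conjI allI)
      show "f differentiable_on UNIV" using d by (auto simp: differentiable_on_def differentiable_def)
      fix v
      show "(\<lambda>x. frechet_derivative f (at x) v) \<in> S"
        unfolding fd S_def using smooth_fun_iter_derivsD(3)[OF sm a, of v] by blast
    qed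
  qed
  have "smooth_fun (\<lambda>x. c * g (r *\<^sub>R x))"
  proof (rule smooth_funI[where S=S])
    show "(\<lambda>x. c * g (r *\<^sub>R x)) \<in> S" unfolding S_def using iter_derivs.base by blast
  qed (use cl in auto)
  moreover have "{x. c * g (r *\<^sub>R x) \<noteq> 0} \<subseteq> (\<lambda>y. (1/r) *\<^sub>R y) ` {x. g x \<noteq> 0}"
    using assms(2) by (auto intro!: image_eqI[where x = "r *\<^sub>R _"])
  hence "bounded {x. c * g (r *\<^sub>R x) \<noteq> 0}"
    using assms(1) by (auto simp: Cc_inf_iff_bounded_support intro: bounded_subset bounded_scaling)
  ultimately show ?thesis by (simp add: Cc_inf_iff_bounded_support)
qed

lemma lborel_integral_cbox:
  fixes F :: "'a::euclidean_space \<Rightarrow> real"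
  assumes c: "continuous_on UNIV F" and z: "\<And>t. t \<notin> cbox a b \<Longrightarrow> F t = 0"
  shows "integrable lborel F" "integral\<^sup>L lborel F = integral (cbox a b) F"
proof -
  have "compact (F ` cbox a b)" by (rule compact_continuous_image) (use c in \<open>auto intro: continuous_on_subset\<close>)
  then obtain B where B: "\<And>y. y \<in> F ` cbox a b \<Longrightarrow> norm y \<le> B" using compact_imp_bounded bounded_iff by metis
  have [measurable]: "F \<in> borel_measurable borel" using c by (rule borel_measurable_continuous_onI)
  have le: "norm (F t) \<le> norm (B * indicator (cbox a b) t)" for t
    using B[of "F t"] z[of t] by (cases "t \<in> cbox a b") (auto simp: indicator_def)
  have ii: "integrable lborel (\<lambda>t. B * indicator (cbox a b) t :: real)"
    by (intro integrable_mult_right integrable_real_indicator) (use emeasure_lborel_cbox_finite[of a b] in auto)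
  show i: "integrable lborel F"
    by (rule Bochner_Integration.integrable_bound[OF ii]) (use le in auto)
  have "(F has_integral integral\<^sup>L lborel F) UNIV" by (rule has_integral_integral_lborel[OF i])
  moreover have "F = (\<lambda>x. if x \<in> cbox a b then F x else 0)" using z by auto
  ultimately have "((\<lambda>x. if x \<in> cbox a b then F x else 0) has_integral integral\<^sup>L lborel F) UNIV" by simp
  hence "(F has_integral integral\<^sup>L lborel F) (cbox a b)" by (simp add: has_integral_restrict_UNIV)
  thus "integral\<^sup>L lborel F = integral (cbox a b) F" by (simp add: integral_unique)
qed

lemma corr_has_derivative:
  fixes \<rho> a :: "'a::euclidean_space \<Rightarrow> real"
  assumes c\<rho>: "continuous_on UNIV \<rho>" and supp: "\<And>t. t \<notin> cbox a0 b0 \<Longrightarrow> \<rho> t = 0"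
    and da: "\<And>x. (a has_derivative D x) (at x)" and cD: "\<And>v. continuous_on UNIV (\<lambda>x. D x v)"
  shows "(corr \<rho> a has_derivative (\<lambda>v. corr \<rho> (\<lambda>x. D x v) x0)) (at x0)"
proof -
  have ca: "continuous_on UNIV a"
    using da by (meson continuous_at_imp_continuous_on has_derivative_continuous)
  have corr_eq: "corr \<rho> b x = integral (cbox a0 b0) (\<lambda>t. \<rho> t * b (x + t))" if "continuous_on UNIV b" for b x
  proof -
    have "continuous_on UNIV (\<lambda>t. \<rho> t * b (x + t))"
      by (intro continuous_intros c\<rho> continuous_on_compose2[OF that]) auto
    thus ?thesis unfolding corr_def by (rule lborel_integral_cbox(2)) (use supp in auto)
  qed
  define fx where "fx = (\<lambda>x t. Blinfun (\<lambda>v. \<rho> t * D (x + t) v))"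
  have fxa: "blinfun_apply (fx x t) = (\<lambda>v. \<rho> t * D (x + t) v)" for x t
  proof -
    have "bounded_linear (D (x + t))" using da[of "x + t"] has_derivative_bounded_linear by blast
    thus ?thesis unfolding fx_def
      by (intro bounded_linear_Blinfun_apply bounded_linear_compose[OF bounded_linear_mult_right])
  qed
  have hd: "((\<lambda>x. \<rho> t * a (x + t)) has_derivative blinfun_apply (fx x t)) (at x within UNIV)" for x t
  proof -
    have "((\<lambda>x. x + t) has_derivative (\<lambda>v. v)) (at x)" by (auto intro!: derivative_eq_intros)
    from has_derivative_compose[OF this da[of "x + t"]]
    have "((\<lambda>x. a (x + t)) has_derivative D (x + t)) (at x)" by (simp add: o_def)
    from has_derivative_mult_right[OF this, of "\<rho> t"] show ?thesis by (simp add: fxa)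
  qed
  have cfx: "continuous_on (UNIV \<times> cbox a0 b0) (\<lambda>(x, t). fx x t)"
  proof (rule continuous_on_blinfun_componentwise)
    fix i :: 'a
    have "continuous_on (UNIV \<times> cbox a0 b0) (\<lambda>z. \<rho> (snd z) * D (fst z + snd z) i)"
      by (intro continuous_on_mult continuous_on_compose2[OF c\<rho>] continuous_on_compose2[OF cD]
          continuous_intros) auto
    thus "continuous_on (UNIV \<times> cbox a0 b0) (\<lambda>x. blinfun_apply (case x of (x, t) \<Rightarrow> fx x t) i)"
      by (simp add: fxa case_prod_beta)
  qed
  have intf: "(\<lambda>t. \<rho> t * a (x + t)) integrable_on cbox a0 b0" for x
    by (rule integrable_continuous) (intro continuous_intros continuous_on_compose2[OF c\<rho>]
        continuous_on_compose2[OF ca]; auto)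
  have intfx: "fx x integrable_on cbox a0 b0" for x
  proof (rule integrable_continuous)
    have "continuous_on (cbox a0 b0) ((\<lambda>(x, t). fx x t) \<circ> (\<lambda>t. (x, t)))"
      by (rule continuous_on_compose[OF _ continuous_on_subset[OF cfx]]) (auto intro: continuous_intros)
    thus "continuous_on (cbox a0 b0) (fx x)" by (simp add: o_def)
  qed
  have "((\<lambda>x. integral (cbox a0 b0) (\<lambda>t. \<rho> t * a (x + t))) has_derivative
      blinfun_apply (integral (cbox a0 b0) (fx x0))) (at x0)"
    using leibniz_rule[of UNIV a0 b0 "\<lambda>x t. \<rho> t * a (x + t)" fx x0, OF hd intf cfx] by simp
  moreover have "(\<lambda>x. integral (cbox a0 b0) (\<lambda>t. \<rho> t * a (x + t))) = corr \<rho> a"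
    using corr_eq[OF ca] by auto
  moreover have "blinfun_apply (integral (cbox a0 b0) (fx x0)) = (\<lambda>v. corr \<rho> (\<lambda>x. D x v) x0)"
    using blinfun_apply_integral[OF intfx] corr_eq[OF cD] by (auto simp: fxa)
  ultimately show ?thesis by simp
qed

lemma corr_nonzero_subset_differences:
  "{x. corr \<rho> g x \<noteq> 0} \<subseteq> (\<Union>x\<in>{x. g x \<noteq> 0}. \<Union>y\<in>{y. \<rho> y \<noteq> 0}. {x - y})"
proof
  fix x assume x: "x \<in> {x. corr \<rho> g x \<noteq> 0}"
  have "\<exists>y. \<rho> y * g (x + y) \<noteq> 0"
  proof (rule ccontr)
    assume "\<nexists>y. \<rho> y * g (x + y) \<noteq> 0"
    hence "(\<lambda>y. \<rho> y * g (x + y)) = (\<lambda>y. 0)" by auto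
    hence "corr \<rho> g x = 0" unfolding corr_def by simp
    thus False using x by simp
  qed
  then obtain y where "\<rho> y \<noteq> 0" "g (x + y) \<noteq> 0" by auto
  thus "x \<in> (\<Union>x\<in>{x. g x \<noteq> 0}. \<Union>y\<in>{y. \<rho> y \<noteq> 0}. {x - y})"
    by (intro UN_I[of "x + y"] UN_I[of y]) auto
qed

lemma corr_Cc_inf:
  fixes \<rho> g :: "'a::euclidean_space \<Rightarrow> real"
  assumes \<rho>: "\<rho> \<in> Cc_inf" and g: "g \<in> Cc_inf"
  shows "corr \<rho> g \<in> Cc_inf"
proof -
  have smg: "smooth_fun g" using Cc_infD[OF g] by simp
  obtain a0 b0 where supp: "\<And>t. t \<notin> cbox a0 b0 \<Longrightarrow> \<rho> t = 0" using Cc_inf_support_in_cbox[OF \<rho>] by blast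
  have c\<rho>: "continuous_on UNIV \<rho>" using Cc_infD[OF \<rho>] by simp
  have der: "(corr \<rho> a has_derivative (\<lambda>v. corr \<rho> (\<lambda>x. frechet_derivative a (at x) v) x0)) (at x0)"
    if a: "a \<in> iter_derivs g" for a x0
    using smooth_fun_iter_derivsD[OF smg a] smooth_fun_iter_derivsD(2)[OF smg smooth_fun_iter_derivsD(3)[OF smg a]]
    by (intro corr_has_derivative[OF c\<rho> supp]) auto
  have "smooth_fun (corr \<rho> g)"
  proof (rule smooth_funI[where S="corr \<rho> ` iter_derivs g"])
    show "corr \<rho> g \<in> corr \<rho> ` iter_derivs g" using iter_derivs.base by blast
  next
    fix f assume "f \<in> corr \<rho> ` iter_derivs g"
    then obtain a where a: "a \<in> iter_derivs g" and f: "f = corr \<rho> a" by blast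
    show "f differentiable_on UNIV"
      unfolding f using der[OF a] by (auto simp: differentiable_on_def differentiable_def)
    fix v
    have "frechet_derivative f (at x) v = corr \<rho> (\<lambda>x. frechet_derivative a (at x) v) x" for x
      unfolding f using fun_cong[OF frechet_derivative_at[OF der[OF a, of x]], of v] by simp
    hence "(\<lambda>x. frechet_derivative f (at x) v) = corr \<rho> (\<lambda>x. frechet_derivative a (at x) v)" by auto
    thus "(\<lambda>x. frechet_derivative f (at x) v) \<in> corr \<rho> ` iter_derivs g"
      using smooth_fun_iter_derivsD(3)[OF smg a] by simp
  qed
  moreover have "bounded {x. corr \<rho> g x \<noteq> 0}"
    using \<rho> g by (auto simp: Cc_inf_iff_bounded_support intro: bounded_subset[OF bounded_differences
          corr_nonzero_subset_differences])
  ultimately show ?thesis by (simp add: Cc_inf_iff_bounded_support)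
qed

lemma integral_pos_if_continuous:
  fixes F :: "'a::euclidean_space \<Rightarrow> real"
  assumes c: "continuous_on UNIV F" and nn: "\<And>x. 0 \<le> F x" and i: "integrable lborel F" and z: "0 < F z"
  shows "0 < integral\<^sup>L lborel F"
proof -
  have "continuous (at z) F" using c by (simp add: continuous_on_eq_continuous_at)
  then obtain d where d: "d > 0" "\<And>y. dist y z < d \<Longrightarrow> dist (F y) (F z) < F z / 2"
    using z unfolding continuous_at_eps_delta by (meson half_gt_zero)
  have le: "F z / 2 * indicator (ball z d) y \<le> F y" for y
  proof (cases "y \<in> ball z d")
    case True
    hence "dist (F y) (F z) < F z / 2" using d by (simp add: dist_commute)
    hence "F z / 2 \<le> F y" unfolding dist_real_def by linarith
    thus ?thesis using True by (simp add: indicator_def)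
  next
    case False thus ?thesis using nn by simp
  qed
  have ii: "integrable lborel (\<lambda>y. F z / 2 * indicator (ball z d) y :: real)"
    by (intro integrable_mult_right integrable_real_indicator) (use emeasure_lborel_ball_finite[of z d] in auto)
  have "0 < F z / 2 * measure lborel (ball z d)" using z d content_ball_pos by auto
  also have "\<dots> = (\<integral>y. F z / 2 * indicator (ball z d) y \<partial>lborel)" by simp
  also have "\<dots> \<le> integral\<^sup>L lborel F" by (rule integral_mono[OF ii i le])
  finally show ?thesis .
qed

lemma exists_mollifier:
  fixes g0 :: "'a::euclidean_space \<Rightarrow> real"
  assumes g0: "g0 \<in> Cc_inf" and x0: "g0 x0 \<noteq> 0" and t: "0 < t"
  obtains \<rho> :: "'a \<Rightarrow> real"
  where "\<rho> \<in> Cc_inf" "\<And>y. 0 \<le> \<rho> y" "integral\<^sup>L lborel \<rho> = 1" "\<And>y. \<rho> y \<noteq> 0 \<Longrightarrow> norm y < t"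
proof -
  define \<psi> where "\<psi> = (\<lambda>x. g0 x * g0 x)"
  have \<psi>: "\<psi> \<in> Cc_inf" unfolding \<psi>_def using Cc_inf_mult[OF g0 g0] .
  obtain R where R: "R > 0" "\<And>x. norm x > R \<Longrightarrow> \<psi> x = 0" using Cc_inf_bounded_support[OF \<psi>] by blast
  define r where "r = 2 * R / t"
  have r: "0 < r" using R t by (simp add: r_def)
  define \<phi> where "\<phi> = (\<lambda>x. 1 * \<psi> (r *\<^sub>R x))"
  have \<phi>: "\<phi> \<in> Cc_inf" unfolding \<phi>_def by (rule Cc_inf_scale[OF \<psi>]) (use r in simp)
  have pos: "0 < \<phi> ((1/r) *\<^sub>R x0)" using r x0 by (auto simp: \<phi>_def \<psi>_def zero_less_mult_iff)
  have I: "0 < integral\<^sup>L lborel \<phi>"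
    by (rule integral_pos_if_continuous[OF Cc_infD(3)[OF \<phi>] _ Cc_inf_in_Lp_lborel(2)[OF \<phi> zero_less_one] pos])
      (simp add: \<phi>_def \<psi>_def)
  show thesis
  proof (rule that[of "\<lambda>x. (1 / integral\<^sup>L lborel \<phi>) * \<psi> (r *\<^sub>R x)"])
    show "(\<lambda>x. (1 / integral\<^sup>L lborel \<phi>) * \<psi> (r *\<^sub>R x)) \<in> Cc_inf"
      by (rule Cc_inf_scale[OF \<psi>]) (use r in simp)
    show "0 \<le> (1 / integral\<^sup>L lborel \<phi>) * \<psi> (r *\<^sub>R y)" for y using I by (simp add: \<psi>_def)
    show "(\<integral>x. (1 / integral\<^sup>L lborel \<phi>) * \<psi> (r *\<^sub>R x) \<partial>lborel) = 1"
      using I by (simp add: \<phi>_def)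
    show "norm y < t" if "(1 / integral\<^sup>L lborel \<phi>) * \<psi> (r *\<^sub>R y) \<noteq> 0" for y
    proof -
      have "norm (r *\<^sub>R y) \<le> R" using that R(2)[of "r *\<^sub>R y"] by force
      hence "norm y \<le> R / r" using r by (simp add: field_simps)
      also have "R / r = t / 2" using R t by (simp add: r_def field_simps)
      finally show "norm y < t" using t by simp
    qed
  qed
qed

section \<open>Approximation by mollified test functions\<close>

lemma rescaled_translate_diff_sub_corr_le:
  fixes \<rho> F :: "'a::euclidean_space \<Rightarrow> real"
  assumes p: "1 \<le> p" and \<rho>: "\<rho> \<in> Cc_inf" "(\<integral>y. \<bar>\<rho> y\<bar> \<partial>lborel) = 1"
    and [measurable]: "F \<in> borel_measurable borel" and F: "in_Lp_lborel p F"
    and h: "h \<noteq> 0" and \<delta>: "0 < \<delta>" and s: "0 \<le> s" and e: "0 \<le> e"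
    and near: "norm h < \<delta> \<Longrightarrow> norm h powr (-s) * Lp_norm_lborel p (\<lambda>x. F (x + h) - F x) \<le> e"
    and far: "Lp_norm_lborel p (\<lambda>x. F x - corr \<rho> F x) \<le> e * \<delta> powr s / 2"
  shows "norm h powr (-s) * Lp_norm_lborel p (\<lambda>x. (F (x + h) - corr \<rho> F (x + h)) - (F x - corr \<rho> F x))
    \<le> 2 * e"
proof -
  obtain R where [measurable]: "\<rho> \<in> borel_measurable borel" and \<rho>i: "integrable lborel \<rho>"
    and bd: "\<And>y. \<bar>\<rho> y\<bar> \<le> R"
    using Cc_inf_kernel[OF \<rho>(1)] by blast
  have \<rho>F: "in_Lp_lborel p (corr \<rho> F)" using Lp_lborel_corr(1)[OF p _ _ \<rho>i F] by simp
  have AL: "in_Lp_lborel p (\<lambda>x. F x - corr \<rho> F x)" using Lp_lborel_diff(1)[OF p _ _ F \<rho>F] by simp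
  show ?thesis
  proof (cases "norm h < \<delta>")
    case True
    have "Lp_norm_lborel p (\<lambda>x. (F (x + h) - corr \<rho> F (x + h)) - (F x - corr \<rho> F x))
        \<le> Lp_norm_lborel p (\<lambda>x. F (x + h) - F x)
          + Lp_norm_lborel p (\<lambda>x. corr \<rho> F (x + h) - corr \<rho> F x)"
      using Lp_lborel_diff(2)[OF p _ _ Lp_lborel_translate_diff(1)[OF p _ F]
          Lp_lborel_translate_diff(1)[OF p _ \<rho>F], of h h]
      by (simp add: algebra_simps)
    also have "\<dots> \<le> 2 * Lp_norm_lborel p (\<lambda>x. F (x + h) - F x)"
      using corr_translate_diff_le[OF p _ _ bd \<rho>i F, of h] \<rho>(2) by simp
    finally have "norm h powr (-s) * Lp_norm_lborel p (\<lambda>x. (F (x + h) - corr \<rho> F (x + h)) - (F x - corr \<rho> F x))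
        \<le> norm h powr (-s) * (2 * Lp_norm_lborel p (\<lambda>x. F (x + h) - F x))"
      by (rule mult_left_mono) simp
    thus ?thesis using near[OF True] by (simp add: mult.left_commute)
  next
    case False
    have "Lp_norm_lborel p (\<lambda>x. (F (x + h) - corr \<rho> F (x + h)) - (F x - corr \<rho> F x)) \<le> e * \<delta> powr s"
      using Lp_lborel_translate_diff(2)[OF p _ AL, of h] far by simp
    also have "\<dots> \<le> e * norm h powr s"
      using False \<delta> s e by (intro mult_left_mono powr_mono2) auto
    finally have "norm h powr (-s) * Lp_norm_lborel p (\<lambda>x. (F (x + h) - corr \<rho> F (x + h)) - (F x - corr \<rho> F x))
        \<le> e" by (rule powr_neg_mult_le[OF h])
    thus ?thesis using e by simp
  qed
qed

lemma rescaled_translate_diff_corr_le: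
  fixes \<rho> u :: "'a::euclidean_space \<Rightarrow> real"
  assumes p: "1 \<le> p" and s: "0 \<le> s" "s \<le> 1" and \<rho>: "\<rho> \<in> Cc_inf" "(\<integral>y. \<bar>\<rho> y\<bar> \<partial>lborel) = 1"
    and C: "0 \<le> C" "\<And>h. norm h \<le> 1 \<Longrightarrow> (\<integral>x. \<bar>\<rho> (x + h) - \<rho> x\<bar> \<partial>lborel) \<le> C * norm h"
    and um[measurable]: "u \<in> borel_measurable borel" and u: "in_Lp_lborel p u" and h: "h \<noteq> 0"
  shows "norm h powr (-s) * Lp_norm_lborel p (\<lambda>x. corr \<rho> u (x + h) - corr \<rho> u x)
    \<le> max (2 * Lp_norm_lborel p u) (C * Lp_norm_lborel p u)"
proof (rule powr_neg_mult_le_max[OF h s])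
  obtain R where \<rho>m[measurable]: "\<rho> \<in> borel_measurable borel" and \<rho>i: "integrable lborel \<rho>"
    and bd: "\<And>y. \<bar>\<rho> y\<bar> \<le> R"
    using Cc_inf_kernel[OF \<rho>(1)] by blast
  show "Lp_norm_lborel p (\<lambda>x. corr \<rho> u (x + h) - corr \<rho> u x) \<le> 2 * Lp_norm_lborel p u"
    using Lp_lborel_translate_diff(2)[OF p _ Lp_lborel_corr(1)[OF p _ _ \<rho>i u], of h]
      Lp_lborel_corr(2)[OF p _ _ \<rho>i u] \<rho>(2) by simp
  assume "norm h \<le> 1"
  hence "(\<integral>y. \<bar>\<rho> (y - h) - \<rho> y\<bar> \<partial>lborel) \<le> C * norm h" using C(2)[of "- h"] by simp
  have "Lp_norm_lborel p (\<lambda>x. corr \<rho> u (x + h) - corr \<rho> u x)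
      \<le> (\<integral>y. \<bar>\<rho> (y - h) - \<rho> y\<bar> \<partial>lborel) * Lp_norm_lborel p u"
    by (rule corr_translate_diff_le_kernel[OF p \<rho>m um bd \<rho>i u])
  also have "\<dots> \<le> C * norm h * Lp_norm_lborel p u"
    by (rule mult_right_mono) (fact, rule Lp_norm_lborel_nonneg)
  finally show "Lp_norm_lborel p (\<lambda>x. corr \<rho> u (x + h) - corr \<rho> u x) \<le> C * Lp_norm_lborel p u * norm h"
    by (simp add: mult_ac)
qed (use C(1) Lp_norm_lborel_nonneg[of p u] in auto)

lemma mollified_approximant_split:
  fixes F \<rho> g :: "'a::euclidean_space \<Rightarrow> real"
  assumes p: "1 \<le> p" and [measurable]: "F \<in> borel_measurable borel" and F: "in_Lp_lborel p F"
    and \<rho>: "\<rho> \<in> Cc_inf" and g: "g \<in> Cc_inf"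
  shows "(\<lambda>x. F x - corr \<rho> g x) = (\<lambda>x. (F x - corr \<rho> F x) + corr \<rho> (\<lambda>x. F x - g x) x)"
proof -
  obtain R where [measurable]: "\<rho> \<in> borel_measurable borel" and \<rho>i: "integrable lborel \<rho>"
    and bd: "\<And>y. \<bar>\<rho> y\<bar> \<le> R"
    using Cc_inf_kernel[OF \<rho>] by blast
  show ?thesis
    using corr_diff[OF p _ _ Cc_infD(4)[OF g] bd \<rho>i F Cc_inf_in_Lp_lborel(1)[OF g]] p by auto
qed

lemma Lp_norm_lborel_sub_mollified_le:
  fixes F \<rho> g :: "'a::euclidean_space \<Rightarrow> real"
  assumes p: "1 \<le> p" and Fm[measurable]: "F \<in> borel_measurable borel" and F: "in_Lp_lborel p F"
    and \<rho>: "\<rho> \<in> Cc_inf" "(\<integral>y. \<bar>\<rho> y\<bar> \<partial>lborel) = 1" and g: "g \<in> Cc_inf"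
  shows "Lp_norm_lborel p (\<lambda>x. F x - corr \<rho> g x)
    \<le> Lp_norm_lborel p (\<lambda>x. F x - corr \<rho> F x) + Lp_norm_lborel p (\<lambda>x. F x - g x)"
proof -
  have \<rho>m[measurable]: "\<rho> \<in> borel_measurable borel" using Cc_infD(4)[OF \<rho>(1)] .
  have \<rho>i: "integrable lborel \<rho>" using Cc_inf_in_Lp_lborel(2)[OF \<rho>(1) zero_less_one] .
  have gm[measurable]: "g \<in> borel_measurable borel" using Cc_infD(4)[OF g] .
  have uL: "in_Lp_lborel p (\<lambda>x. F x - g x)"
    by (rule Lp_lborel_diff(1)[OF p Fm gm F Cc_inf_in_Lp_lborel(1)[OF g]]) (use p in simp)
  have AL: "in_Lp_lborel p (\<lambda>x. F x - corr \<rho> F x)"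
    by (rule Lp_lborel_diff(1)[OF p Fm _ F Lp_lborel_corr(1)[OF p \<rho>m Fm \<rho>i F]]) simp
  have "Lp_norm_lborel p (\<lambda>x. F x - corr \<rho> g x) \<le> Lp_norm_lborel p (\<lambda>x. F x - corr \<rho> F x)
      + Lp_norm_lborel p (corr \<rho> (\<lambda>x. F x - g x))"
    unfolding mollified_approximant_split[OF p Fm F \<rho>(1) g]
    by (rule Lp_lborel_add(2)[OF p _ _ AL Lp_lborel_corr(1)[OF p _ _ \<rho>i uL]]) simp_all
  also have "Lp_norm_lborel p (corr \<rho> (\<lambda>x. F x - g x)) \<le> Lp_norm_lborel p (\<lambda>x. F x - g x)"
    using Lp_lborel_corr(2)[OF p _ _ \<rho>i uL] \<rho>(2) by simp
  finally show ?thesis by simp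
qed

lemma rescaled_translate_diff_sub_mollified_le:
  fixes F \<rho> g :: "'a::euclidean_space \<Rightarrow> real"
  assumes p: "1 \<le> p" and s: "0 \<le> s" "s \<le> 1"
    and Fm[measurable]: "F \<in> borel_measurable borel" and F: "in_Lp_lborel p F"
    and \<rho>: "\<rho> \<in> Cc_inf" "(\<integral>y. \<bar>\<rho> y\<bar> \<partial>lborel) = 1"
    and C: "0 \<le> C" "\<And>h. norm h \<le> 1 \<Longrightarrow> (\<integral>x. \<bar>\<rho> (x + h) - \<rho> x\<bar> \<partial>lborel) \<le> C * norm h"
    and g: "g \<in> Cc_inf" and \<delta>: "0 < \<delta>" and e: "0 \<le> e"
    and near: "\<And>h. h \<noteq> 0 \<Longrightarrow> norm h < \<delta> \<Longrightarrow>
      norm h powr (-s) * Lp_norm_lborel p (\<lambda>x. F (x + h) - F x) \<le> e"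
    and far: "Lp_norm_lborel p (\<lambda>x. F x - corr \<rho> F x) \<le> e * \<delta> powr s / 2"
    and close: "(C + 2) * Lp_norm_lborel p (\<lambda>x. F x - g x) \<le> e"
    and h: "h \<noteq> 0"
  shows "norm h powr (-s) *
    Lp_norm_lborel p (\<lambda>x. (F (x + h) - corr \<rho> g (x + h)) - (F x - corr \<rho> g x)) \<le> 3 * e"
proof -
  have \<rho>m[measurable]: "\<rho> \<in> borel_measurable borel" using Cc_infD(4)[OF \<rho>(1)] .
  have \<rho>i: "integrable lborel \<rho>" using Cc_inf_in_Lp_lborel(2)[OF \<rho>(1) zero_less_one] .
  have gm[measurable]: "g \<in> borel_measurable borel" using Cc_infD(4)[OF g] .
  define u where "u = (\<lambda>x. F x - g x)"
  define A where "A = (\<lambda>x. F x - corr \<rho> F x)"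
  have um[measurable]: "u \<in> borel_measurable borel" and Am[measurable]: "A \<in> borel_measurable borel"
    unfolding u_def A_def by measurable
  have uL: "in_Lp_lborel p u"
    unfolding u_def by (rule Lp_lborel_diff(1)[OF p Fm gm F Cc_inf_in_Lp_lborel(1)[OF g]]) (use p in simp)
  have AL: "in_Lp_lborel p A"
    unfolding A_def by (rule Lp_lborel_diff(1)[OF p Fm _ F Lp_lborel_corr(1)[OF p \<rho>m Fm \<rho>i F]]) simp
  have BL: "in_Lp_lborel p (corr \<rho> u)" by (rule Lp_lborel_corr(1)[OF p \<rho>m um \<rho>i uL])
  have "Lp_norm_lborel p (\<lambda>x. (F (x + h) - corr \<rho> g (x + h)) - (F x - corr \<rho> g x))
      \<le> Lp_norm_lborel p (\<lambda>x. A (x + h) - A x) + Lp_norm_lborel p (\<lambda>x. corr \<rho> u (x + h) - corr \<rho> u x)"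
    using Lp_lborel_add(2)[OF p _ _ Lp_lborel_translate_diff(1)[OF p Am AL]
        Lp_lborel_translate_diff(1)[OF p _ BL], of h h]
      fun_cong[OF mollified_approximant_split[OF p Fm F \<rho>(1) g]]
    by (simp add: A_def u_def algebra_simps)
  hence "norm h powr (-s) * Lp_norm_lborel p (\<lambda>x. (F (x + h) - corr \<rho> g (x + h)) - (F x - corr \<rho> g x))
      \<le> norm h powr (-s) * Lp_norm_lborel p (\<lambda>x. A (x + h) - A x)
        + norm h powr (-s) * Lp_norm_lborel p (\<lambda>x. corr \<rho> u (x + h) - corr \<rho> u x)"
    by (simp add: distrib_left[symmetric] mult_left_mono)
  also have "norm h powr (-s) * Lp_norm_lborel p (\<lambda>x. A (x + h) - A x) \<le> 2 * e"
    unfolding A_def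
    by (rule rescaled_translate_diff_sub_corr_le[OF p \<rho> Fm F h \<delta> s(1) e near[OF h] far])
  also have "norm h powr (-s) * Lp_norm_lborel p (\<lambda>x. corr \<rho> u (x + h) - corr \<rho> u x) \<le> e"
  proof -
    have "0 \<le> C * Lp_norm_lborel p u" using C(1) Lp_norm_lborel_nonneg[of p u] by simp
    hence "max (2 * Lp_norm_lborel p u) (C * Lp_norm_lborel p u) \<le> e"
      using close Lp_norm_lborel_nonneg[of p u] by (auto simp: u_def algebra_simps)
    thus ?thesis using rescaled_translate_diff_corr_le[OF p s \<rho> C um uL h] by linarith
  qed
  finally show ?thesis by simp
qed

lemma tendsto_0_at_0_radius:
  fixes f :: "'a::real_normed_vector \<Rightarrow> real"
  assumes "(f \<longlongrightarrow> 0) (at 0)" and "0 < e"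
  obtains \<delta> where "0 < \<delta>" "\<delta> \<le> 1" "\<And>h. h \<noteq> 0 \<Longrightarrow> norm h < \<delta> \<Longrightarrow> f h \<le> e"
proof -
  obtain \<delta> where \<delta>: "0 < \<delta>" "\<And>h. h \<noteq> 0 \<Longrightarrow> dist h 0 < \<delta> \<Longrightarrow> f h < e"
    using order_tendstoD(2)[OF assms] unfolding eventually_at by (elim exE conjE) auto
  show thesis
  proof (rule that[of "min \<delta> 1"])
    show "f h \<le> e" if "h \<noteq> 0" "norm h < min \<delta> 1" for h using \<delta>(2)[of h] that by simp
  qed (use \<delta>(1) in auto)
qed

lemma Lp_norm_lborel_sub_mollifier_le:
  fixes F \<rho> :: "'a::euclidean_space \<Rightarrow> real"
  assumes p: "1 \<le> p" and [measurable]: "F \<in> borel_measurable borel" and F: "in_Lp_lborel p F"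
    and B: "0 \<le> B" "\<And>h. Lp_norm_lborel p (\<lambda>x. F (x + h) - F x) \<le> B * norm h powr s" and s: "0 \<le> s"
    and \<rho>: "\<rho> \<in> Cc_inf" "\<And>y. 0 \<le> \<rho> y" "integral\<^sup>L lborel \<rho> = 1" "\<And>y. \<rho> y \<noteq> 0 \<Longrightarrow> norm y < t"
  shows "Lp_norm_lborel p (\<lambda>x. F x - corr \<rho> F x) \<le> B * t powr s"
proof -
  obtain R where [measurable]: "\<rho> \<in> borel_measurable borel" and \<rho>i: "integrable lborel \<rho>"
    and bd: "\<And>y. \<bar>\<rho> y\<bar> \<le> R"
    using Cc_inf_kernel[OF \<rho>(1)] by blast
  have "Lp_norm_lborel p (\<lambda>x. F (x + y) - F x) \<le> B * t powr s" if "\<rho> y \<noteq> 0" for y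
  proof -
    have "norm y powr s \<le> t powr s" using \<rho>(4)[OF that] s by (intro powr_mono2) auto
    thus ?thesis using B(2)[of y] mult_left_mono[OF _ B(1)] by (meson order.trans)
  qed
  moreover have "0 \<le> B * t powr s" using B(1) by simp
  ultimately show ?thesis
    using Lp_norm_lborel_sub_corr_le(2)[OF p _ _ bd \<rho>i F \<rho>(3)] \<rho>(2,3) by simp
qed

lemma Cc_inf_approx_Besov_lborel:
  fixes F :: "'a::euclidean_space \<Rightarrow> real"
  assumes p: "1 \<le> p" and s: "0 < s" "s < 1"
    and Fm[measurable]: "F \<in> borel_measurable borel" and F: "in_Lp_lborel p F"
    and Bc: "0 \<le> Bc" "\<And>h. Lp_norm_lborel p (\<lambda>x. F (x + h) - F x) \<le> Bc * norm h powr s"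
    and vanish: "((\<lambda>h. norm h powr (-s) * Lp_norm_lborel p (\<lambda>x. F (x + h) - F x)) \<longlongrightarrow> 0) (at 0)"
    and approx: "\<And>\<eta>. 0 < \<eta> \<Longrightarrow> \<exists>g\<in>Cc_inf. Lp_norm_lborel p (\<lambda>x. F x - g x) < \<eta>"
    and \<epsilon>: "0 < \<epsilon>"
  obtains g where "g \<in> Cc_inf" "Lp_norm_lborel p (\<lambda>x. F x - g x) \<le> \<epsilon>"
    "\<And>h. h \<noteq> 0 \<Longrightarrow>
      norm h powr (-s) * Lp_norm_lborel p (\<lambda>x. (F (x + h) - g (x + h)) - (F x - g x)) \<le> \<epsilon>"
proof (cases "Lp_norm_lborel p F = 0")
  case True
  have "Lp_norm_lborel p (\<lambda>x. F (x + h) - F x) = 0" for h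
    using Lp_lborel_translate_diff(2)[OF p Fm F, of h] True
      Lp_norm_lborel_nonneg[of p "\<lambda>x. F (x + h) - F x"] by linarith
  thus thesis using that[OF Cc_inf_zero] True \<epsilon> by simp
next
  case False
  txt \<open>The definitions provide no explicit bump function; a nonzero test function, from which
    the mollifier is built, is supplied by the approximation hypothesis.\<close>
  hence "0 < Lp_norm_lborel p F" using Lp_norm_lborel_nonneg[of p F] by linarith
  then obtain g0 where g0: "g0 \<in> Cc_inf" and "Lp_norm_lborel p (\<lambda>x. F x - g0 x) < Lp_norm_lborel p F"
    using approx by blast
  hence "\<exists>x0. g0 x0 \<noteq> 0" by (metis (no_types, lifting) ext diff_zero less_irrefl)
  then obtain x0 where x0: "g0 x0 \<noteq> 0" by blast
  define e where "e = \<epsilon> / 4"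
  have e: "0 < e" using \<epsilon> by (simp add: e_def)
  obtain \<delta> where \<delta>: "0 < \<delta>" "\<delta> \<le> 1" and near: "\<And>h. h \<noteq> 0 \<Longrightarrow> norm h < \<delta> \<Longrightarrow>
      norm h powr (-s) * Lp_norm_lborel p (\<lambda>x. F (x + h) - F x) \<le> e"
    using tendsto_0_at_0_radius[OF vanish e] by blast
  have \<delta>s: "\<delta> powr s \<le> 1" using \<delta> s powr_mono2[of s \<delta> 1] by simp
  have "0 < e * \<delta> powr s / 2" using e \<delta>(1) by simp
  then obtain t where t: "0 < t" "Bc * t powr s \<le> e * \<delta> powr s / 2"
    using exists_pos_mult_powr_le[OF Bc(1) _ s(1)] by blast
  obtain \<rho> :: "'a \<Rightarrow> real" where \<rho>: "\<rho> \<in> Cc_inf" "\<And>y. 0 \<le> \<rho> y" "integral\<^sup>L lborel \<rho> = 1"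
    "\<And>y. \<rho> y \<noteq> 0 \<Longrightarrow> norm y < t"
    using exists_mollifier[OF g0 x0 t(1)] by blast
  have \<rho>1: "(\<integral>y. \<bar>\<rho> y\<bar> \<partial>lborel) = 1" using \<rho>(2,3) by simp
  obtain C where C: "0 \<le> C" "\<And>h. norm h \<le> 1 \<Longrightarrow> (\<integral>x. \<bar>\<rho> (x + h) - \<rho> x\<bar> \<partial>lborel) \<le> C * norm h"
    using Cc_inf_translate_diff_le[OF \<rho>(1) zero_less_one] unfolding Lp_norm_lborel_one by blast
  obtain g where g: "g \<in> Cc_inf" "Lp_norm_lborel p (\<lambda>x. F x - g x) < e / (C + 2)"
    using approx[of "e / (C + 2)"] e C(1) by auto
  have close: "(C + 2) * Lp_norm_lborel p (\<lambda>x. F x - g x) \<le> e"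
    using g(2) C(1) by (simp add: field_simps)
  have far: "Lp_norm_lborel p (\<lambda>x. F x - corr \<rho> F x) \<le> e * \<delta> powr s / 2"
    using Lp_norm_lborel_sub_mollifier_le[OF p Fm F Bc less_imp_le[OF s(1)] \<rho>] t(2) by simp
  have "0 \<le> C * Lp_norm_lborel p (\<lambda>x. F x - g x)"
    using C(1) Lp_norm_lborel_nonneg[of p "\<lambda>x. F x - g x"] by simp
  hence "2 * Lp_norm_lborel p (\<lambda>x. F x - g x) \<le> e" using close by (simp add: algebra_simps)
  hence est: "Lp_norm_lborel p (\<lambda>x. F x - corr \<rho> g x) \<le> e * \<delta> powr s / 2 + e"
    using Lp_norm_lborel_sub_mollified_le[OF p Fm F \<rho>(1) \<rho>1 g(1)] far
      Lp_norm_lborel_nonneg[of p "\<lambda>x. F x - g x"] by linarith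
  show thesis
  proof (rule that[OF corr_Cc_inf[OF \<rho>(1) g(1)]])
    have "e * \<delta> powr s / 2 \<le> e" using mult_left_mono[OF \<delta>s, of e] e by simp
    moreover have "e + e \<le> \<epsilon>" using \<epsilon> by (simp add: e_def)
    ultimately show "Lp_norm_lborel p (\<lambda>x. F x - corr \<rho> g x) \<le> \<epsilon>" using est by linarith
    show "norm h powr (-s) * Lp_norm_lborel p (\<lambda>x. (F (x + h) - corr \<rho> g (x + h)) - (F x - corr \<rho> g x))
      \<le> \<epsilon>" if "h \<noteq> 0" for h
      using rescaled_translate_diff_sub_mollified_le[OF p less_imp_le[OF s(1)] less_imp_le[OF s(2)] Fm F
          \<rho>(1) \<rho>1 C g(1) \<delta>(1) less_imp_le[OF e] near far close that] e
      by (simp add: e_def)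
  qed
qed

section \<open>Borel representatives\<close>

lemma AE_borel_measurable_completion:
  fixes f g :: "'b \<Rightarrow> real"
  assumes g: "g \<in> borel_measurable M" and ae: "AE x in M. f x = g x"
  shows "f \<in> borel_measurable (completion M)"
proof -
  obtain N where N: "{x \<in> space M. \<not> f x = g x} \<subseteq> N" "N \<in> null_sets M" using ae by (auto elim!: AE_E)
  show ?thesis
  proof (rule measurableI)
    show "x \<in> space (completion M) \<Longrightarrow> f x \<in> space borel" for x by simp
    fix A :: "real set" assume A: "A \<in> sets borel"
    have eq: "f -` A \<inter> space (completion M) = ((g -` A \<inter> space M) - N) \<union> (f -` A \<inter> space M \<inter> N)"
      using N(1) by auto
    have "(g -` A \<inter> space M) - N \<in> sets M" using g A N(2) by (auto intro: measurable_sets)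
    hence 1: "(g -` A \<inter> space M) - N \<in> sets (completion M)" by (rule sets_completionI_sets)
    have "f -` A \<inter> space M \<inter> N \<in> null_sets (completion M)"
      by (rule null_sets_completion_subset[of _ N]) (use N(2) null_sets_completionI in auto)
    hence 2: "f -` A \<inter> space M \<inter> N \<in> sets (completion M)" by auto
    show "f -` A \<inter> space (completion M) \<in> sets (completion M)" unfolding eq using 1 2 by auto
  qed
qed

lemma Lp_norm_eq_if_AE:
  fixes u v :: "'a::euclidean_space \<Rightarrow> real"
  assumes v[measurable]: "v \<in> borel_measurable borel" and ae: "AE x in lborel. u x = v x"
  shows "Lp_norm p u = Lp_norm_lborel p v" "in_Lp p u \<longleftrightarrow> in_Lp_lborel p v"
proof -
  have um[measurable]: "u \<in> borel_measurable lebesgue"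
    by (rule AE_borel_measurable_completion[OF _ ae]) simp
  have ae2: "AE x in lebesgue. \<bar>u x\<bar> powr p = \<bar>v x\<bar> powr p"
    using ae by (simp add: AE_completion_iff) (auto elim: eventually_mono)
  have vm2: "(\<lambda>x. \<bar>v x\<bar> powr p) \<in> borel_measurable lebesgue"
    by (rule measurable_completion) simp
  have "(LINT x|lebesgue. \<bar>u x\<bar> powr p) = (LINT x|lebesgue. \<bar>v x\<bar> powr p)"
    by (rule integral_cong_AE) (use ae2 vm2 in auto)
  also have "\<dots> = (LINT x|lborel. \<bar>v x\<bar> powr p)" by (rule integral_completion) simp
  finally show "Lp_norm p u = Lp_norm_lborel p v" by (simp add: Lp_norm_def Lp_norm_lborel_def)
  have "integrable lebesgue (\<lambda>x. \<bar>u x\<bar> powr p) \<longleftrightarrow> integrable lebesgue (\<lambda>x. \<bar>v x\<bar> powr p)"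
    by (rule integrable_cong_AE) (use ae2 vm2 in auto)
  also have "\<dots> \<longleftrightarrow> integrable lborel (\<lambda>x. \<bar>v x\<bar> powr p)" by (rule integrable_completion) simp
  finally show "in_Lp p u \<longleftrightarrow> in_Lp_lborel p v" using um by (simp add: in_Lp_def in_Lp_lborel_def)
qed

lemma AE_translate:
  fixes f F :: "'a::euclidean_space \<Rightarrow> real"
  assumes ae: "AE x in lborel. f x = F x"
  shows "AE x in lborel. f (x + h) = F (x + h)"
proof -
  from ae obtain N where "{x \<in> space lborel. \<not> f x = F x} \<subseteq> N" "emeasure lborel N = 0"
    "N \<in> sets lborel"
    by (rule AE_E)
  hence N: "{x \<in> space lborel. \<not> f x = F x} \<subseteq> N" "N \<in> null_sets lborel" by (auto intro: null_setsI)
  have "{x. x - (- h) \<in> N} \<in> null_sets lborel" by (rule null_sets_translation[OF N(2)])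
  moreover have "{x \<in> space lborel. \<not> f (x + h) = F (x + h)} \<subseteq> {x. x - (- h) \<in> N}" using N(1) by auto
  ultimately show ?thesis by (rule AE_I')
qed

lemma Lp_norm_sub_eq_if_AE:
  fixes f F g :: "'a::euclidean_space \<Rightarrow> real"
  assumes ae: "AE x in lborel. f x = F x"
    and [measurable]: "F \<in> borel_measurable borel" "g \<in> borel_measurable borel"
  shows "Lp_norm p (\<lambda>x. f x - g x) = Lp_norm_lborel p (\<lambda>x. F x - g x)"
    "Lp_norm p (\<lambda>x. (f (x + h) - g (x + h)) - (f x - g x))
      = Lp_norm_lborel p (\<lambda>x. (F (x + h) - g (x + h)) - (F x - g x))"
proof -
  show "Lp_norm p (\<lambda>x. f x - g x) = Lp_norm_lborel p (\<lambda>x. F x - g x)"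
    by (rule Lp_norm_eq_if_AE(1)) (use ae in \<open>auto elim: eventually_mono\<close>)
  from ae AE_translate[OF ae]
  have "AE x in lborel. (f (x + h) - g (x + h)) - (f x - g x) = (F (x + h) - g (x + h)) - (F x - g x)"
    by eventually_elim simp
  thus "Lp_norm p (\<lambda>x. (f (x + h) - g (x + h)) - (f x - g x))
      = Lp_norm_lborel p (\<lambda>x. (F (x + h) - g (x + h)) - (F x - g x))"
    by (intro Lp_norm_eq_if_AE(1)) auto
qed

section \<open>The Besov and Nikolskii closures of \<open>C\<^sub>c\<^sup>\<infinity>\<close>\<close>

lemma nikolskii_semi_le_besov_semi:
  "nikolskii_semi s p u \<le> besov_semi s p (u :: 'a::euclidean_space \<Rightarrow> real)"
  unfolding nikolskii_semi_def besov_semi_def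
proof (rule Limsup_bounded)
  show "\<forall>\<^sub>F h in at 0. ereal (norm h powr - s * Lp_norm p (\<lambda>x. u (x + h) - u x))
      \<le> (SUP h\<in>- {0}. ereal (norm h powr - s * Lp_norm p (\<lambda>x. u (x + h) - u x)))"
    unfolding eventually_at by (intro exI[of _ 1]) (auto intro: SUP_upper)
qed

lemma nikolskii_semi_nonneg: "0 \<le> nikolskii_semi s p (u :: 'a::euclidean_space \<Rightarrow> real)"
  unfolding nikolskii_semi_def
  by (rule le_Limsup) (auto simp: Lp_norm_def intro!: always_eventually)

lemma Lp_norm_le_nikolskii_norm:
  "ereal (Lp_norm p u) \<le> nikolskii_norm s p (u :: 'a::euclidean_space \<Rightarrow> real)"
  unfolding nikolskii_norm_def using nikolskii_semi_nonneg by (intro add_increasing2) auto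

lemma nikolskii_semi_le_nikolskii_norm:
  "nikolskii_semi s p u \<le> nikolskii_norm s p (u :: 'a::euclidean_space \<Rightarrow> real)"
  unfolding nikolskii_norm_def by (intro add_increasing) (auto simp: Lp_norm_def)

lemma besov_zero_imp_nikolskii_zero:
  fixes f :: "'a::euclidean_space \<Rightarrow> real"
  assumes "f \<in> besov_zero s p"
  shows "f \<in> nikolskii_zero s p"
proof -
  have le: "nikolskii_norm s p u \<le> besov_norm s p u" for u :: "'a \<Rightarrow> real"
    unfolding nikolskii_norm_def besov_norm_def by (intro add_left_mono nikolskii_semi_le_besov_semi)
  show ?thesis
    using assms le_less_trans[OF le] unfolding besov_zero_def nikolskii_zero_def by blast
qed

lemma besov_semi_finite_imp_bound_lborel:
  fixes f F :: "'a::euclidean_space \<Rightarrow> real"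
  assumes p: "0 < p" and fin: "besov_semi s p f < \<infinity>"
    and ae: "AE x in lborel. f x = F x" and [measurable]: "F \<in> borel_measurable borel"
  obtains B where "0 \<le> B" "\<And>h. Lp_norm_lborel p (\<lambda>x. F (x + h) - F x) \<le> B * norm h powr s"
proof -
  define B where "B = max 0 (real_of_ereal (besov_semi s p f))"
  have "Lp_norm_lborel p (\<lambda>x. F (x + h) - F x) \<le> B * norm h powr s" for h
  proof (cases "h = 0")
    case True
    thus ?thesis using p by (simp add: Lp_norm_lborel_def)
  next
    case False
    have "ereal (norm h powr - s * Lp_norm p (\<lambda>x. f (x + h) - f x)) \<le> besov_semi s p f"
      unfolding besov_semi_def using False by (intro SUP_upper) auto
    moreover have "Lp_norm p (\<lambda>x. f (x + h) - f x) = Lp_norm_lborel p (\<lambda>x. F (x + h) - F x)"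
      using Lp_norm_sub_eq_if_AE(2)[OF ae, of "\<lambda>x. 0" p h] by simp
    ultimately have "norm h powr - s * Lp_norm_lborel p (\<lambda>x. F (x + h) - F x) \<le> B"
      using fin by (cases "besov_semi s p f") (auto simp: B_def)
    hence "norm h powr s * (norm h powr - s * Lp_norm_lborel p (\<lambda>x. F (x + h) - F x))
        \<le> norm h powr s * B" by (rule mult_left_mono) simp
    thus ?thesis using False by (simp add: powr_minus field_simps)
  qed
  moreover have "0 \<le> B" by (simp add: B_def)
  ultimately show thesis using that by blast
qed

lemma nikolskii_zero_Lp_approx_lborel:
  fixes f F :: "'a::euclidean_space \<Rightarrow> real"
  assumes f: "f \<in> nikolskii_zero s p" and ae: "AE x in lborel. f x = F x"
    and [measurable]: "F \<in> borel_measurable borel" and \<eta>: "0 < \<eta>"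
  shows "\<exists>g\<in>Cc_inf. Lp_norm_lborel p (\<lambda>x. F x - g x) < \<eta>"
proof -
  obtain g where g: "g \<in> Cc_inf" "nikolskii_norm s p (\<lambda>x. f x - g x) < ereal \<eta>"
    using f \<eta> unfolding nikolskii_zero_def by blast
  have "Lp_norm p (\<lambda>x. f x - g x) < \<eta>"
    using le_less_trans[OF Lp_norm_le_nikolskii_norm g(2)] by simp
  thus ?thesis using g(1) Lp_norm_sub_eq_if_AE(1)[OF ae _ Cc_infD(4)[OF g(1)]] by auto
qed

lemma nikolskii_zero_modulus_tendsto_0:
  fixes f F :: "'a::euclidean_space \<Rightarrow> real"
  assumes p: "1 \<le> p" and s: "s < 1" and f: "f \<in> nikolskii_zero s p"
    and ae: "AE x in lborel. f x = F x"
    and Fm[measurable]: "F \<in> borel_measurable borel" and F: "in_Lp_lborel p F"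
  shows "((\<lambda>h. norm h powr (-s) * Lp_norm_lborel p (\<lambda>x. F (x + h) - F x)) \<longlongrightarrow> 0) (at 0)"
proof (rule tendstoI)
  fix e :: real assume e: "0 < e"
  obtain g where g: "g \<in> Cc_inf" "nikolskii_norm s p (\<lambda>x. f x - g x) < ereal (e / 2)"
    using f half_gt_zero[OF e] unfolding nikolskii_zero_def by blast
  have gm[measurable]: "g \<in> borel_measurable borel" using Cc_infD(4)[OF g(1)] .
  have gL: "in_Lp_lborel p g" using Cc_inf_in_Lp_lborel(1)[OF g(1)] p by simp
  obtain C where C: "0 \<le> C" "\<And>h. norm h \<le> 1 \<Longrightarrow> Lp_norm_lborel p (\<lambda>x. g (x + h) - g x) \<le> C * norm h"
    using Cc_inf_translate_diff_le[OF g(1) less_le_trans[OF zero_less_one p]] by blast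
  have "nikolskii_semi s p (\<lambda>x. f x - g x) < ereal (e / 2)"
    using le_less_trans[OF nikolskii_semi_le_nikolskii_norm g(2)] .
  hence "\<forall>\<^sub>F h in at 0. ereal (norm h powr - s *
      Lp_norm p (\<lambda>x. (f (x + h) - g (x + h)) - (f x - g x))) < ereal (e / 2)"
    unfolding nikolskii_semi_def by (rule Limsup_lessD)
  hence rest: "\<forall>\<^sub>F h in at 0. norm h powr - s *
      Lp_norm_lborel p (\<lambda>x. (F (x + h) - g (x + h)) - (F x - g x)) < e / 2"
    by eventually_elim (simp add: Lp_norm_sub_eq_if_AE(2)[OF ae Fm gm])
  have "((\<lambda>h. C * norm h powr (1 - s)) \<longlongrightarrow> C * 0) (at (0::'a))"
    using s by (intro tendsto_mult tendsto_const tendsto_zero_powrI tendsto_norm_zero) auto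
  hence smooth: "\<forall>\<^sub>F h in at (0::'a). C * norm h powr (1 - s) < e / 2"
    by (rule order_tendstoD(2)) (use e in simp)
  have small: "\<forall>\<^sub>F h in at (0::'a). h \<noteq> 0 \<and> norm h \<le> 1"
    unfolding eventually_at by (intro exI[of _ 1]) (auto simp: dist_norm)
  from rest smooth small
  show "\<forall>\<^sub>F h in at 0. dist (norm h powr (-s) * Lp_norm_lborel p (\<lambda>x. F (x + h) - F x)) 0 < e"
  proof eventually_elim
    case (elim h)
    define u where "u = (\<lambda>x. F x - g x)"
    have um[measurable]: "u \<in> borel_measurable borel" unfolding u_def by measurable
    have uL: "in_Lp_lborel p u" unfolding u_def by (rule Lp_lborel_diff(1)[OF p Fm gm F gL])
    have "(\<lambda>x. F (x + h) - F x) = (\<lambda>x. (u (x + h) - u x) + (g (x + h) - g x))"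
      by (auto simp: u_def)
    hence "Lp_norm_lborel p (\<lambda>x. F (x + h) - F x)
        \<le> Lp_norm_lborel p (\<lambda>x. u (x + h) - u x) + Lp_norm_lborel p (\<lambda>x. g (x + h) - g x)"
      using Lp_lborel_add(2)[OF p _ _ Lp_lborel_translate_diff(1)[OF p um uL]
          Lp_lborel_translate_diff(1)[OF p gm gL], of h h] by simp
    also have "Lp_norm_lborel p (\<lambda>x. g (x + h) - g x) \<le> C * norm h" using C(2) elim(3) by simp
    finally have "norm h powr (-s) * Lp_norm_lborel p (\<lambda>x. F (x + h) - F x)
        \<le> norm h powr (-s) * Lp_norm_lborel p (\<lambda>x. u (x + h) - u x) + norm h powr (-s) * (C * norm h)"
      by (simp add: distrib_left[symmetric] mult_left_mono)
    also have "norm h powr (-s) * (C * norm h) = C * norm h powr (1 - s)"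
      using elim(3) by (simp add: powr_diff powr_minus field_simps)
    also have "norm h powr (-s) * Lp_norm_lborel p (\<lambda>x. u (x + h) - u x) + C * norm h powr (1 - s) < e"
      using elim(1,2) by (simp add: u_def)
    finally show ?case using Lp_norm_lborel_nonneg[of p "\<lambda>x. F (x + h) - F x"] by (simp add: abs_of_nonneg)
  qed
qed

lemma besov_norm_sub_le_if_AE:
  fixes f F g :: "'a::euclidean_space \<Rightarrow> real"
  assumes ae: "AE x in lborel. f x = F x"
    and Fm: "F \<in> borel_measurable borel" and gm: "g \<in> borel_measurable borel"
    and a: "Lp_norm_lborel p (\<lambda>x. F x - g x) \<le> a"
    and b: "\<And>h. h \<noteq> 0 \<Longrightarrow>
      norm h powr (-s) * Lp_norm_lborel p (\<lambda>x. (F (x + h) - g (x + h)) - (F x - g x)) \<le> b"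
  shows "besov_norm s p (\<lambda>x. f x - g x) \<le> ereal (a + b)"
proof -
  have "besov_semi s p (\<lambda>x. f x - g x) \<le> ereal b"
    unfolding besov_semi_def
    using b Lp_norm_sub_eq_if_AE(2)[OF ae Fm gm] by (intro SUP_least) simp
  moreover have "ereal (Lp_norm p (\<lambda>x. f x - g x)) \<le> ereal a"
    using a Lp_norm_sub_eq_if_AE(1)[OF ae Fm gm] by simp
  ultimately have "besov_norm s p (\<lambda>x. f x - g x) \<le> ereal a + ereal b"
    unfolding besov_norm_def by (rule add_mono[rotated])
  thus ?thesis by simp
qed

lemma nikolskii_zero_imp_besov_zero:
  fixes f :: "'a::euclidean_space \<Rightarrow> real"
  assumes p: "1 \<le> p" and s: "0 < s" "s < 1" and f: "f \<in> nikolskii_zero s p"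
  shows "f \<in> besov_zero s p"
proof -
  have fB: "in_Lp p f" "besov_semi s p f < \<infinity>"
    using f by (auto simp: nikolskii_zero_def besov_space_def)
  have "f \<in> borel_measurable (completion lborel)" using fB(1) by (simp add: in_Lp_def)
  then obtain F where "F \<in> borel_measurable lborel" and ae: "AE x in lborel. f x = F x"
    using completion_ex_borel_measurable_real by blast
  hence Fm[measurable]: "F \<in> borel_measurable borel" by simp
  have F: "in_Lp_lborel p F" using Lp_norm_eq_if_AE(2)[OF Fm ae] fB(1) by simp
  have p0: "0 < p" using p by simp
  obtain B where B: "0 \<le> B" "\<And>h. Lp_norm_lborel p (\<lambda>x. F (x + h) - F x) \<le> B * norm h powr s"
    using besov_semi_finite_imp_bound_lborel[OF p0 fB(2) ae Fm] by blast
  have "\<exists>g\<in>Cc_inf. besov_norm s p (\<lambda>x. f x - g x) < ereal \<epsilon>" if \<epsilon>: "0 < \<epsilon>" for \<epsilon>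
  proof -
    have \<epsilon>3: "0 < \<epsilon> / 3" using \<epsilon> by simp
    obtain g where g: "g \<in> Cc_inf" "Lp_norm_lborel p (\<lambda>x. F x - g x) \<le> \<epsilon> / 3"
      "\<And>h. h \<noteq> 0 \<Longrightarrow>
        norm h powr (-s) * Lp_norm_lborel p (\<lambda>x. (F (x + h) - g (x + h)) - (F x - g x)) \<le> \<epsilon> / 3"
      using Cc_inf_approx_Besov_lborel[OF p s Fm F B
            nikolskii_zero_modulus_tendsto_0[OF p s(2) f ae Fm F]
            nikolskii_zero_Lp_approx_lborel[OF f ae Fm] \<epsilon>3] by blast
    have "besov_norm s p (\<lambda>x. f x - g x) \<le> ereal (\<epsilon> / 3 + \<epsilon> / 3)"
      by (rule besov_norm_sub_le_if_AE[OF ae Fm Cc_infD(4)[OF g(1)] g(2,3)])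
    also have "\<dots> < ereal \<epsilon>" using \<epsilon> by simp
    finally show ?thesis using g(1) by blast
  qed
  thus ?thesis using f by (simp add: besov_zero_def nikolskii_zero_def)
qed

theorem proposition5p6:
  fixes s p :: real and f :: "'a::euclidean_space \<Rightarrow> real"
  assumes "0 < s" "s < 1" "1 \<le> p"
  shows "f \<in> (nikolskii_zero s p :: ('a \<Rightarrow> real) set) \<longleftrightarrow> f \<in> besov_zero s p"
  using besov_zero_imp_nikolskii_zero nikolskii_zero_imp_besov_zero[OF assms(3,1,2)] by blast

end
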